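(* Let $k = \mathbb Z/(2)$, $U = k[X,Y,Z]$ the polynomial ring, $R = U/(XY(X+Y))$, let $x,y,z$ be the images of $X,Y,Z$ in $R$, and $A = k[x,y]\subseteq R$. Then: (1) $\overline R = R/xR\times R/yR\times R/(x+y)R$ and $\overline A = A/xA\times A/yA\times A/(x+y)A$ (with $R$, resp. $A$, embedded diagonally; via the canonical injections $A/xA\to R/xR$ etc., regard $\overline A\subseteq\overline R$). (2) With $\mathfrak m = (x,y)A$ and $\rho = (\overline y, 0, 0)\in\overline A$, the strict closure $A^*$ of $A$ in $\overline A$ is $A^* = A + \mathfrak m\overline A = A + k\rho$, and $\ell_A(A^*/A) = 1$. (3) $A = A^a \subsetneq A^*$. (4) $R^* = A^*[z] = R + k[z]\cdot\rho$ and $R^a = R + k[z]\cdot z(1+z)\rho$; hence $R\subsetneq R^a\subsetneq R^*$. Here $R^*$ is the strict closure of $R$ in $\overline R$, and $A^a$, $R^a$ are weakly Arf closures.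
   Context: For a commutative ring $B$, $W(B)$ is the set of non-zerodivisors, $\mathrm{Q}(B)$ the total ring of fractions, $\overline B$ the integral closure of $B$ in $\mathrm{Q}(B)$; $\overline{(\cdot)}$ on components denotes images in the corresponding quotient ring. The strict closure of $B$ in $C\supseteq B$ is $\{\alpha \in C \mid \alpha\otimes 1 = 1\otimes \alpha \text{ in } C\otimes_B C\}$. $B$ is weakly Arf if for all $a,b,c\in B$ with $a\in W(B)$ and $\frac ba,\frac ca\in\overline B$ one has $\frac{bc}{a}\in B$. Weakly Arf closure: $B_1 = B[\frac{bc}{a}\mid a\in W(B),\ b,c\in B,\ \frac ba,\frac ca\in\overline B]$, $B_0=B$, $B_n=(B_{n-1})_1$, and $B^a=\bigcup_n B_n$ (the smallest weakly Arf ring between $B$ and $\overline B$). $\ell_A$ denotes length as $A$-module. *)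

theory Defs
  imports "HOL-Library.Z2" "HOL-Library.Function_Algebras" "HOL-Library.Poly_Mapping"
          "HOL-Library.Extended_Nat"
          "HOL-Computational_Algebra.Polynomial" "HOL-Computational_Algebra.Fraction_Field"
begin

text \<open>All rings below are unital subrings of an ambient commutative ring of type 'a.
  The ambient ring is chosen large enough to contain the total rings of fractions
  of all rings considered (every non-zerodivisor of those rings is a unit of the
  ambient ring), so Q(B) is realised as a subset of the ambient ring.\<close>

inductive_set ring_gen :: "'a::comm_ring_1 set \<Rightarrow> 'a set" for S where
  gen: "s \<in> S \<Longrightarrow> s \<in> ring_gen S"
| one: "1 \<in> ring_gen S"
| add: "u \<in> ring_gen S \<Longrightarrow> v \<in> ring_gen S \<Longrightarrow> u + v \<in> ring_gen S"
| neg: "u \<in> ring_gen S \<Longrightarrow> - u \<in> ring_gen S"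
| mult: "u \<in> ring_gen S \<Longrightarrow> v \<in> ring_gen S \<Longrightarrow> u * v \<in> ring_gen S"

definition nzd :: "'a::comm_ring_1 set \<Rightarrow> 'a set" where
  "nzd B = {a \<in> B. \<forall>b\<in>B. a * b = 0 \<longrightarrow> b = 0}"

definition tot_quot :: "'a::comm_ring_1 set \<Rightarrow> 'a set" where
  "tot_quot B = {q. \<exists>a\<in>nzd B. a * q \<in> B}"

definition int_closure :: "'a::comm_ring_1 set \<Rightarrow> 'a set" where
  "int_closure B = {q \<in> tot_quot B. \<exists>n cs. (\<forall>i<n. cs i \<in> B) \<and>
                       q ^ n + (\<Sum>i<n. cs i * q ^ i) = 0}"

text \<open>Tensor product C \<otimes>_B C: the free abelian group on C \<times> C modulo the
  B-balanced bilinearity relations.  tensor_rel B C is the subgroup of relations.\<close>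
inductive_set tensor_rel :: "'a::comm_ring_1 set \<Rightarrow> 'a set \<Rightarrow> (('a \<times> 'a) \<Rightarrow>\<^sub>0 int) set"
  for B C where
  zero: "0 \<in> tensor_rel B C"
| addl: "c \<in> C \<Longrightarrow> c' \<in> C \<Longrightarrow> d \<in> C \<Longrightarrow>
     Poly_Mapping.single (c + c', d) 1 - Poly_Mapping.single (c, d) 1
       - Poly_Mapping.single (c', d) 1 \<in> tensor_rel B C"
| addr: "c \<in> C \<Longrightarrow> d \<in> C \<Longrightarrow> d' \<in> C \<Longrightarrow>
     Poly_Mapping.single (c, d + d') 1 - Poly_Mapping.single (c, d) 1
       - Poly_Mapping.single (c, d') 1 \<in> tensor_rel B C"
| bal: "c \<in> C \<Longrightarrow> d \<in> C \<Longrightarrow> b \<in> B \<Longrightarrow>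
     Poly_Mapping.single (c * b, d) 1 - Poly_Mapping.single (c, b * d) 1 \<in> tensor_rel B C"
| plus: "u \<in> tensor_rel B C \<Longrightarrow> v \<in> tensor_rel B C \<Longrightarrow> u + v \<in> tensor_rel B C"
| uminus: "u \<in> tensor_rel B C \<Longrightarrow> - u \<in> tensor_rel B C"

definition strict_closure :: "'a::comm_ring_1 set \<Rightarrow> 'a set \<Rightarrow> 'a set" where
  "strict_closure B C = {\<alpha> \<in> C.
     Poly_Mapping.single (\<alpha>, 1) 1 - Poly_Mapping.single (1, \<alpha>) 1 \<in> tensor_rel B C}"

definition wa_step :: "'a::comm_ring_1 set \<Rightarrow> 'a set" where
  "wa_step B = ring_gen (B \<union> {q \<in> tot_quot B. \<exists>a\<in>nzd B. \<exists>b\<in>B. \<exists>c\<in>B.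
      (\<exists>u\<in>int_closure B. a * u = b) \<and> (\<exists>v\<in>int_closure B. a * v = c) \<and> a * q = b * c})"

definition wa_closure :: "'a::comm_ring_1 set \<Rightarrow> 'a set" where
  "wa_closure B = (\<Union>n. (wa_step ^^ n) B)"

definition submod :: "'a::comm_ring_1 set \<Rightarrow> 'a set \<Rightarrow> bool" where
  "submod A L \<longleftrightarrow> 0 \<in> L \<and> (\<forall>u\<in>L. \<forall>v\<in>L. u + v \<in> L) \<and> (\<forall>u\<in>L. - u \<in> L)
                  \<and> (\<forall>a\<in>A. \<forall>u\<in>L. a * u \<in> L)"

definition mod_length :: "'a::comm_ring_1 set \<Rightarrow> 'a set \<Rightarrow> 'a set \<Rightarrow> enat" where
  "mod_length A M N = (SUP n \<in> {n. \<exists>L. L 0 = M \<and> L n = N \<and> (\<forall>i<n. L i \<subset> L (Suc i))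
                                   \<and> (\<forall>i\<le>n. submod A (L i))}. enat n)"

inductive_set ext_ideal :: "'a::comm_ring_1 set \<Rightarrow> 'a set \<Rightarrow> 'a set" for I C where
  zero: "0 \<in> ext_ideal I C"
| prod: "i \<in> I \<Longrightarrow> c \<in> C \<Longrightarrow> i * c \<in> ext_ideal I C"
| add: "u \<in> ext_ideal I C \<Longrightarrow> v \<in> ext_ideal I C \<Longrightarrow> u + v \<in> ext_ideal I C"

text \<open>Field k = Z/(2) is the type bit.  K = k(s,t) = fraction field of k[s][t].
  The ambient ring is T = K \<times> K \<times> K, realised as functions cmp \<Rightarrow> K.\<close>

datatype cmp = C1 | C2 | C3

type_synonym K = "bit poly poly fract"
type_synonym T = "cmp \<Rightarrow> K"

definition kemb :: "bit \<Rightarrow> 'b::comm_ring_1" where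
  "kemb c = (if c = 0 then 0 else 1)"

definition var_s :: K where "var_s = Fract [:[:0, 1:]:] 1"
definition var_t :: K where "var_t = Fract [:0, 1:] 1"

text \<open>Component 1 is R/xR (x\<mapsto>0, y\<mapsto>s, z\<mapsto>t), component 2 is R/yR (x\<mapsto>s, y\<mapsto>0, z\<mapsto>t),
  component 3 is R/(x+y)R (x\<mapsto>s, y\<mapsto>-s = s, z\<mapsto>t).\<close>
definition xx :: T where "xx = (\<lambda>i. case i of C1 \<Rightarrow> 0 | C2 \<Rightarrow> var_s | C3 \<Rightarrow> var_s)"
definition yy :: T where "yy = (\<lambda>i. case i of C1 \<Rightarrow> var_s | C2 \<Rightarrow> 0 | C3 \<Rightarrow> - var_s)"
definition zz :: T where "zz = (\<lambda>i. var_t)"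

text \<open>Evaluation U = k[X,Y,Z] \<rightarrow> T, X\<mapsto>x, Y\<mapsto>y, Z\<mapsto>z.  A polynomial in U is
  represented as bit poly poly poly, with X innermost and Z outermost.\<close>
definition eval3 :: "bit poly poly poly \<Rightarrow> T" where
  "eval3 f = poly (map_poly (\<lambda>g. poly (map_poly (\<lambda>h. poly (map_poly kemb h) xx) g) yy) f) zz"

definition polyX :: "bit poly poly poly" where "polyX = [:[:[:0, 1:]:]:]"
definition polyY :: "bit poly poly poly" where "polyY = [:[:0, 1:]:]"

text \<open>R = k[x,y,z] = image of U; A = k[x,y].  (k = {0,1} is the prime field.)\<close>
definition RR :: "T set" where "RR = ring_gen {xx, yy, zz}"
definition AA :: "T set" where "AA = ring_gen {xx, yy}"

definition kk :: "T set" where "kk = range kemb"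

definition rho :: T where "rho = (\<lambda>i. if i = C1 then yy C1 else 0)"

end

theory Submission
  imports Defs "HOL-Computational_Algebra.Normalized_Fraction" "HOL-Computational_Algebra.Field_as_Ring"
    "HOL-Computational_Algebra.Polynomial_Factorial"
begin

(* All rings live in K^3, K = k(s,t), one factor for each of the lines x = 0, y = 0, x + y = 0 of
   XY(X+Y) = 0, with s the coordinate along the line and t = z.  A triple of polynomials
   (f1, f2, f3) in k[s,t] lies in R iff the s^0-parts of the fi agree (the value on the common axis)
   and their s^1-parts sum to 0 (the three transversal derivatives, which cancel in characteristic 2).
   Requiring instead that the s^1-parts sum into an ideal I of k[t] gives a ring, and every ring in
   the theorem is of this form: the normalisation drops both conditions, the strict closure drops
   the second one (I = k[t], i.e. R* = R + k[z] rho), and one weakly Arf step leads from I = 0 to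
   I = (t(1+t)), which is stable.  Both facts come from the identity: for l, u, v in k^3 with
   sum l = sum l u = sum l v = 0 also sum l u v = 0, which over k = Z/(2) holds at t = 0 and t = 1
   but not identically.  For A the components involve no t, so the same identity shows that A is
   weakly Arf, while A* = A + k rho. *)

section \<open>Ring homomorphisms and generated subrings\<close>

definition is_ring_hom :: "('a::comm_ring_1 \<Rightarrow> 'b::comm_ring_1) \<Rightarrow> bool" where
  "is_ring_hom f \<longleftrightarrow> (\<forall>a b. f (a + b) = f a + f b) \<and> (\<forall>a b. f (a * b) = f a * f b) \<and> f 1 = 1"

lemma ring_hom_add: "is_ring_hom f \<Longrightarrow> f (a + b) = f a + f b"
  and ring_hom_mult: "is_ring_hom f \<Longrightarrow> f (a * b) = f a * f b"
  and ring_hom_1: "is_ring_hom f \<Longrightarrow> f 1 = 1"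
  by (simp_all add: is_ring_hom_def)

lemma ring_hom_0: "is_ring_hom f \<Longrightarrow> f 0 = 0"
  using ring_hom_add[of f 0 0] by simp

lemma ring_hom_uminus: "is_ring_hom f \<Longrightarrow> f (- a) = - f a"
  using ring_hom_add[of f a "- a"] ring_hom_0[of f] by (simp add: eq_neg_iff_add_eq_0 add.commute)

lemma ring_hom_sum: "is_ring_hom f \<Longrightarrow> f (sum g A) = (\<Sum>x\<in>A. f (g x))"
  by (induct A rule: infinite_finite_induct) (auto simp: ring_hom_0 ring_hom_add)

lemma ring_hom_power: "is_ring_hom f \<Longrightarrow> f (a ^ n) = f a ^ n"
  by (induct n) (auto simp: ring_hom_1 ring_hom_mult)

lemma map_poly_add_ring_hom: "is_ring_hom f \<Longrightarrow> map_poly f (p + q) = map_poly f p + map_poly f q"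
  by (rule poly_eqI) (simp add: coeff_map_poly ring_hom_0 ring_hom_add)

lemma map_poly_mult_ring_hom: "is_ring_hom f \<Longrightarrow> map_poly f (p * q) = map_poly f p * map_poly f q"
  by (rule poly_eqI) (simp add: coeff_map_poly ring_hom_0 ring_hom_mult coeff_mult ring_hom_sum)

lemma is_ring_hom_poly_map_poly: "is_ring_hom f \<Longrightarrow> is_ring_hom (\<lambda>p. poly (map_poly f p) x)"
  unfolding is_ring_hom_def[of "\<lambda>p. poly (map_poly f p) x"]
  by (simp add: map_poly_add_ring_hom map_poly_mult_ring_hom ring_hom_1)

lemma ring_hom_poly: "is_ring_hom g \<Longrightarrow> g (poly p x) = poly (map_poly g p) (g x)"
  by (induct p) (auto simp: map_poly_pCons ring_hom_0 ring_hom_add ring_hom_mult)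

lemma ring_hom_poly_map_poly:
  "is_ring_hom g \<Longrightarrow> f 0 = 0 \<Longrightarrow> g (poly (map_poly f p) x) = poly (map_poly (g \<circ> f) p) (g x)"
  by (induct p) (auto simp: map_poly_pCons ring_hom_0 ring_hom_add ring_hom_mult)

lemma ring_gen_0: "0 \<in> ring_gen S"
  using ring_gen.add[OF ring_gen.one ring_gen.neg[OF ring_gen.one]] by simp

lemma ring_gen_subset: "S \<subseteq> ring_gen S' \<Longrightarrow> ring_gen S \<subseteq> ring_gen S'"
proof
  fix x assume "S \<subseteq> ring_gen S'" "x \<in> ring_gen S"
  from this(2) show "x \<in> ring_gen S'"
    by (induct rule: ring_gen.induct) (use \<open>S \<subseteq> ring_gen S'\<close> in \<open>blast intro: ring_gen.intros\<close>)+
qed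

lemma ring_gen_subset_range:
  assumes "is_ring_hom f" "S \<subseteq> range f"
  shows "ring_gen S \<subseteq> range f"
proof
  fix x assume "x \<in> ring_gen S"
  then show "x \<in> range f"
  proof (induct rule: ring_gen.induct)
    case one
    show ?case using ring_hom_1[OF assms(1)] by (rule range_eqI[OF sym])
  next
    case (add u v)
    then obtain a b where "u = f a" "v = f b" by blast
    then show ?case using ring_hom_add[OF assms(1), of a b] by (metis range_eqI)
  next
    case (neg u)
    then obtain a where "u = f a" by blast
    then show ?case using ring_hom_uminus[OF assms(1), of a] by (metis range_eqI)
  next
    case (mult u v)
    then obtain a b where "u = f a" "v = f b" by blast
    then show ?case using ring_hom_mult[OF assms(1), of a b] by (metis range_eqI)
  qed (use assms(2) in blast)
qed

lemma poly_map_poly_in_ring_gen: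
  assumes "\<And>a. f a \<in> ring_gen S" "x \<in> ring_gen S" "f 0 = 0"
  shows "poly (map_poly f p) x \<in> ring_gen S"
  by (induct p) (auto simp: map_poly_pCons assms ring_gen_0 intro!: ring_gen.add ring_gen.mult)

lemma strict_chain_mono:
  "\<forall>i<n. L i \<subset> L (Suc i) \<Longrightarrow> i \<le> j \<Longrightarrow> j \<le> n \<Longrightarrow> L i \<subseteq> L j"
proof (induct j)
  case (Suc j)
  show ?case
  proof (cases "i = Suc j")
    case False
    with Suc show ?thesis by (auto simp: le_Suc_eq dest!: spec[of _ j])
  qed simp
qed simp


section \<open>Strict closure\<close>

abbreviation tens :: "'a \<Rightarrow> 'a \<Rightarrow> ('a \<times> 'a \<Rightarrow>\<^sub>0 int)" where
  "tens c d \<equiv> Poly_Mapping.single (c, d) 1"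

definition tensor_lift :: "('a \<times> 'a \<Rightarrow> 'b::comm_ring_1) \<Rightarrow> ('a \<times> 'a \<Rightarrow>\<^sub>0 int) \<Rightarrow> 'b" where
  "tensor_lift \<beta> f = (\<Sum>k\<in>Poly_Mapping.keys f. of_int (Poly_Mapping.lookup f k) * \<beta> k)"

lemma tensor_lift_superset:
  "finite A \<Longrightarrow> Poly_Mapping.keys f \<subseteq> A \<Longrightarrow>
    tensor_lift \<beta> f = (\<Sum>k\<in>A. of_int (Poly_Mapping.lookup f k) * \<beta> k)"
  unfolding tensor_lift_def by (rule sum.mono_neutral_left) (auto simp: in_keys_iff)

lemma tensor_lift_add: "tensor_lift \<beta> (f + g) = tensor_lift \<beta> f + tensor_lift \<beta> g"
proof -
  let ?A = "Poly_Mapping.keys f \<union> Poly_Mapping.keys g"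
  have "tensor_lift \<beta> (f + g) = (\<Sum>k\<in>?A. of_int (Poly_Mapping.lookup (f + g) k) * \<beta> k)"
    by (rule tensor_lift_superset) (use keys_add[of f g] in auto)
  also have "\<dots> = (\<Sum>k\<in>?A. of_int (Poly_Mapping.lookup f k) * \<beta> k)
      + (\<Sum>k\<in>?A. of_int (Poly_Mapping.lookup g k) * \<beta> k)"
    by (simp add: lookup_add distrib_right sum.distrib)
  also have "\<dots> = tensor_lift \<beta> f + tensor_lift \<beta> g"
    by (subst (1 2) tensor_lift_superset[of ?A]) auto
  finally show ?thesis .
qed

lemma tensor_lift_uminus: "tensor_lift \<beta> (- f) = - tensor_lift \<beta> f"
  by (simp add: tensor_lift_def sum_negf)

lemma tensor_lift_diff: "tensor_lift \<beta> (f - g) = tensor_lift \<beta> f - tensor_lift \<beta> g"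
  using tensor_lift_add[of \<beta> f "- g"] tensor_lift_uminus[of \<beta> g] by simp

lemma tensor_lift_tens: "tensor_lift \<beta> (tens c d) = \<beta> (c, d)"
  by (simp add: tensor_lift_def)

lemma tensor_lift_tensor_rel:
  assumes "u \<in> tensor_rel B C"
    and "\<And>c c' d. c \<in> C \<Longrightarrow> c' \<in> C \<Longrightarrow> d \<in> C \<Longrightarrow> \<beta> (c + c', d) = \<beta> (c, d) + \<beta> (c', d)"
    and "\<And>c d d'. c \<in> C \<Longrightarrow> d \<in> C \<Longrightarrow> d' \<in> C \<Longrightarrow> \<beta> (c, d + d') = \<beta> (c, d) + \<beta> (c, d')"
    and "\<And>c d b. c \<in> C \<Longrightarrow> d \<in> C \<Longrightarrow> b \<in> B \<Longrightarrow> \<beta> (c * b, d) = \<beta> (c, b * d)"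
  shows "tensor_lift \<beta> u = 0"
  using assms(1)
proof induct
  case zero
  show ?case by (simp add: tensor_lift_def)
qed (simp_all add: assms(2-4) tensor_lift_diff tensor_lift_tens tensor_lift_add tensor_lift_uminus)

definition tensor_eq :: "'a::comm_ring_1 set \<Rightarrow> 'a set \<Rightarrow> ('a \<times> 'a \<Rightarrow>\<^sub>0 int) \<Rightarrow> ('a \<times> 'a \<Rightarrow>\<^sub>0 int) \<Rightarrow> bool"
  where "tensor_eq B C f g \<longleftrightarrow> f - g \<in> tensor_rel B C"

lemma tensor_eq_refl: "tensor_eq B C f f"
  by (simp add: tensor_eq_def tensor_rel.zero)

lemma tensor_eq_sym: "tensor_eq B C f g \<Longrightarrow> tensor_eq B C g f"
  unfolding tensor_eq_def using tensor_rel.uminus[of "f - g" B C] by simp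

lemma tensor_eq_trans: "tensor_eq B C f g \<Longrightarrow> tensor_eq B C g h \<Longrightarrow> tensor_eq B C f h"
proof -
  assume "tensor_eq B C f g" "tensor_eq B C g h"
  then have "(f - g) + (g - h) \<in> tensor_rel B C"
    unfolding tensor_eq_def by (rule tensor_rel.plus)
  then show ?thesis by (simp add: tensor_eq_def)
qed

lemmas [trans] = tensor_eq_trans

lemma tensor_eq_add: "tensor_eq B C f f' \<Longrightarrow> tensor_eq B C g g' \<Longrightarrow> tensor_eq B C (f + g) (f' + g')"
proof -
  assume "tensor_eq B C f f'" "tensor_eq B C g g'"
  then have "(f - f') + (g - g') \<in> tensor_rel B C"
    unfolding tensor_eq_def by (rule tensor_rel.plus)
  then show ?thesis by (simp add: tensor_eq_def add_diff_add)
qed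

lemma tensor_eq_add_left:
  "c \<in> C \<Longrightarrow> c' \<in> C \<Longrightarrow> d \<in> C \<Longrightarrow> tensor_eq B C (tens (c + c') d) (tens c d + tens c' d)"
  unfolding tensor_eq_def using tensor_rel.addl[of c C c' d B] by (simp add: diff_diff_eq)

lemma tensor_eq_add_right:
  "c \<in> C \<Longrightarrow> d \<in> C \<Longrightarrow> d' \<in> C \<Longrightarrow> tensor_eq B C (tens c (d + d')) (tens c d + tens c d')"
  unfolding tensor_eq_def using tensor_rel.addr[of c C d d' B] by (simp add: diff_diff_eq)

lemma tensor_eq_balanced:
  "c \<in> C \<Longrightarrow> d \<in> C \<Longrightarrow> b \<in> B \<Longrightarrow> tensor_eq B C (tens (c * b) d) (tens c (b * d))"
  unfolding tensor_eq_def using tensor_rel.bal[of c C d b B] by simp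

lemma tensor_eq_tens_0_right: "c \<in> C \<Longrightarrow> 0 \<in> C \<Longrightarrow> tensor_eq B C (tens c 0) 0"
  using tensor_rel.uminus[OF tensor_rel.addr[of c C 0 0 B]] by (simp add: tensor_eq_def)

lemma tensor_eq_tens_0_left: "c \<in> C \<Longrightarrow> 0 \<in> C \<Longrightarrow> tensor_eq B C (tens 0 c) 0"
  using tensor_rel.uminus[OF tensor_rel.addl[of 0 C 0 c B]] by (simp add: tensor_eq_def)

lemma strict_closure_iff: "\<alpha> \<in> strict_closure B C \<longleftrightarrow> \<alpha> \<in> C \<and> tensor_eq B C (tens \<alpha> 1) (tens 1 \<alpha>)"
  by (simp add: strict_closure_def tensor_eq_def)

lemma strict_closure_base:
  assumes "b \<in> B" "B \<subseteq> C" "1 \<in> C"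
  shows "b \<in> strict_closure B C"
  using tensor_eq_balanced[of 1 C 1 b B] assms by (auto simp: strict_closure_iff)

lemma strict_closure_add:
  assumes "a \<in> strict_closure B C" "b \<in> strict_closure B C"
    and "\<And>a b. a \<in> C \<Longrightarrow> b \<in> C \<Longrightarrow> a + b \<in> C" "1 \<in> C"
  shows "a + b \<in> strict_closure B C"
proof -
  have C: "a \<in> C" "b \<in> C" "a + b \<in> C" and ta: "tensor_eq B C (tens a 1) (tens 1 a)"
      and tb: "tensor_eq B C (tens b 1) (tens 1 b)"
    using assms by (auto simp: strict_closure_iff)
  have "tensor_eq B C (tens (a + b) 1) (tens a 1 + tens b 1)"
    using C(1,2) assms(4) by (rule tensor_eq_add_left)
  also have "tensor_eq B C \<dots> (tens 1 a + tens 1 b)"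
    using ta tb by (rule tensor_eq_add)
  finally have "tensor_eq B C (tens (a + b) 1) (tens 1 a + tens 1 b)" .
  moreover have "tensor_eq B C (tens 1 (a + b)) (tens 1 a + tens 1 b)"
    using assms(4) C(1,2) by (rule tensor_eq_add_right)
  ultimately show ?thesis
    using C by (auto simp: strict_closure_iff intro: tensor_eq_trans tensor_eq_sym)
qed

lemma tensor_eq_add3_left:
  assumes "a \<in> C" "b \<in> C" "c \<in> C" "a + b \<in> C" "d \<in> C"
  shows "tensor_eq B C (tens (a + b + c) d) (tens a d + tens b d + tens c d)"
proof -
  have "tensor_eq B C (tens (a + b + c) d) (tens (a + b) d + tens c d)"
    using assms by (intro tensor_eq_add_left)
  also have "tensor_eq B C \<dots> (tens a d + tens b d + tens c d)"
    using assms by (intro tensor_eq_add tensor_eq_add_left tensor_eq_refl)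
  finally show ?thesis .
qed

lemma tensor_eq_add3_right:
  assumes "a \<in> C" "b \<in> C" "c \<in> C" "a + b \<in> C" "d \<in> C"
  shows "tensor_eq B C (tens d (a + b + c)) (tens d a + tens d b + tens d c)"
proof -
  have "tensor_eq B C (tens d (a + b + c)) (tens d (a + b) + tens d c)"
    using assms by (intro tensor_eq_add_right)
  also have "tensor_eq B C \<dots> (tens d a + tens d b + tens d c)"
    using assms by (intro tensor_eq_add tensor_eq_add_right tensor_eq_refl)
  finally show ?thesis .
qed

lemma tensor_eq_tens_kill_left:
  assumes "e \<in> C" "q \<in> C" "x \<in> B" "0 \<in> C" "x * q = 0"
  shows "tensor_eq B C (tens (e * x) q) 0"
proof -
  have "tensor_eq B C (tens (e * x) q) (tens e (x * q))"
    using assms by (intro tensor_eq_balanced)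
  also have "tensor_eq B C \<dots> 0"
    using assms tensor_eq_tens_0_right[of e C B] by simp
  finally show ?thesis .
qed

lemma tensor_eq_tens_kill_right:
  assumes "e \<in> C" "q \<in> C" "x \<in> B" "0 \<in> C" "q * x = 0"
  shows "tensor_eq B C (tens q (x * e)) 0"
proof -
  have "tensor_eq B C (tens q (x * e)) (tens (q * x) e)"
    by (rule tensor_eq_sym, rule tensor_eq_balanced) (use assms in auto)
  also have "tensor_eq B C \<dots> 0"
    using assms tensor_eq_tens_0_left[of e C B] by simp
  finally show ?thesis .
qed

text \<open>Both p r \<otimes> 1 and 1 \<otimes> p r reduce to ea \<otimes> p r: split p = ea p + eb p + ec p and move y
  or w across the tensor sign, which kills the eb and ec terms.\<close>

lemma mult_in_strict_closure_split:
  fixes B C :: "'a::comm_ring_1 set"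
  assumes C: "\<And>a b. a \<in> C \<Longrightarrow> b \<in> C \<Longrightarrow> a + b \<in> C \<and> a * b \<in> C" "0 \<in> C" "1 \<in> C" "B \<subseteq> C"
    and B: "y \<in> B" "w \<in> B" "p \<in> B"
    and e: "ea \<in> C" "eb \<in> C" "ec \<in> C" "ea + eb + ec = 1"
    and r: "r = ea * y" "r = ea * w" "eb * y = 0" "ec * w = 0"
  shows "p * r \<in> strict_closure B C"
proof -
  have "p \<in> C" "r \<in> C"
    using B C e r by auto
  then have inC: "p \<in> C" "r \<in> C" "p * r \<in> C" "ea * p \<in> C" "eb * p \<in> C" "ec * p \<in> C"
      "ea * p + eb * p \<in> C"
    using C(1) e by auto
  have p: "p = ea * p + eb * p + ec * p"
    using e(4) by (simp add: distrib_right[symmetric])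
  have "y * (eb * p) = (eb * y) * p" "w * (ec * p) = (ec * w) * p"
      "eb * p * y = (eb * y) * p" "ec * p * w = (ec * w) * p"
    by (simp_all add: ac_simps)
  then have zero: "y * (eb * p) = 0" "w * (ec * p) = 0" "eb * p * y = 0" "ec * p * w = 0"
    using r(3,4) by simp_all
  have "tensor_eq B C (tens (ea * y) (eb * p)) 0" "tensor_eq B C (tens (ea * w) (ec * p)) 0"
    by (rule tensor_eq_tens_kill_left; use e(1) inC B C(2) zero in simp)+
  moreover have "tensor_eq B C (tens (eb * p) (y * ea)) 0" "tensor_eq B C (tens (ec * p) (w * ea)) 0"
    by (rule tensor_eq_tens_kill_right; use e(1) inC B C(2) zero in simp)+
  ultimately have left: "tensor_eq B C (tens r (eb * p)) 0" "tensor_eq B C (tens r (ec * p)) 0"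
    and right: "tensor_eq B C (tens (eb * p) r) 0" "tensor_eq B C (tens (ec * p) r) 0"
    using r(1,2) by (simp_all add: mult.commute)
  have "y * (ea * p) = p * r"
    using r(1) by (simp add: algebra_simps)
  moreover have "tensor_eq B C (tens (ea * y) (ea * p)) (tens ea (y * (ea * p)))"
    by (rule tensor_eq_balanced) (use e(1) inC B in auto)
  ultimately have left1: "tensor_eq B C (tens r (ea * p)) (tens ea (p * r))"
    by (simp only: r(1)[symmetric])
  have right1: "tensor_eq B C (tens (ea * p) r) (tens ea (p * r))"
    using tensor_eq_balanced[of ea C r p B] e(1) inC B by (simp add: mult.commute)
  have "tensor_eq B C (tens (p * r) 1) (tens r p)"
    using tensor_eq_balanced[of r C 1 p B] inC C(3) B by (simp add: mult.commute)
  also have "tensor_eq B C \<dots> (tens r (ea * p) + tens r (eb * p) + tens r (ec * p))"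
    using inC by (subst p) (rule tensor_eq_add3_right)
  also have "tensor_eq B C \<dots> (tens ea (p * r) + 0 + 0)"
    using left left1 by (intro tensor_eq_add)
  also have "tensor_eq B C \<dots> (tens (ea * p) r + tens (eb * p) r + tens (ec * p) r)"
    using tensor_eq_sym[OF right(1)] tensor_eq_sym[OF right(2)] tensor_eq_sym[OF right1]
    by (intro tensor_eq_add)
  also have "tensor_eq B C \<dots> (tens p r)"
    using tensor_eq_sym[OF tensor_eq_add3_left[of "ea * p" C "eb * p" "ec * p" r B]] inC p by simp
  also have "tensor_eq B C \<dots> (tens 1 (p * r))"
    using tensor_eq_balanced[of 1 C r p B] inC C(3) B by simp
  finally show ?thesis
    using inC by (simp add: strict_closure_iff)
qed


section \<open>Characteristic two\<close>

lemma poly_add_self_eq_0: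
  assumes "\<And>x::'a::comm_ring_1. x + x = 0"
  shows "(p::'a poly) + p = 0"
  by (rule poly_eqI) (simp only: coeff_add coeff_0 assms)

lemma bit_add_self: "(x::bit) + x = 0"
  by (cases x) simp_all

lemma bit_poly_add_self: "(p::bit poly) + p = 0"
  by (rule poly_add_self_eq_0) (rule bit_add_self)

lemma bit_poly_poly_add_self: "(p::bit poly poly) + p = 0"
  by (rule poly_add_self_eq_0) (rule bit_poly_add_self)

lemma bit_poly_uminus: "- (p::bit poly) = p"
  using bit_poly_add_self[of p] by (metis add_eq_0_iff)

lemma K_add_self: "(x::K) + x = 0"
proof -
  obtain a b where "x = Fract a b" "b \<noteq> 0" by (cases x) auto
  then show ?thesis by (simp add: bit_poly_poly_add_self Zero_fract_def eq_fract)
qed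

lemma K_uminus: "- (x::K) = x"
  using K_add_self[of x] by (metis add_eq_0_iff)

lemma T_add_self: "(x::T) + x = 0"
  by (rule ext) (simp only: plus_fun_def zero_fun_def K_add_self)

lemma T_uminus: "- (x::T) = x"
  by (rule ext) (simp add: K_uminus)

lemma bit_poly_two: "(2::bit poly) = 0"
  using bit_poly_add_self[of 1] by (simp add: one_add_one)

lemma K_two: "(2::K) = 0"
  using K_add_self[of 1] by (simp add: one_add_one)

lemma T_two: "(2::T) = 0"
  using T_add_self[of 1] by (simp add: one_add_one)

lemma kemb_0 [simp]: "kemb 0 = 0" and kemb_1 [simp]: "kemb 1 = 1"
  by (simp_all add: kemb_def)

lemma is_ring_hom_kemb_K: "is_ring_hom (kemb :: bit \<Rightarrow> K)"
  unfolding is_ring_hom_def kemb_def by (auto simp: K_add_self)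

lemma is_ring_hom_kemb_T: "is_ring_hom (kemb :: bit \<Rightarrow> T)"
  unfolding is_ring_hom_def kemb_def by (auto simp: T_add_self)

lemma kemb_apply: "(kemb c :: T) i = kemb c"
  by (simp add: kemb_def)

lemma kemb_in_ring_gen: "kemb c \<in> ring_gen S"
  by (cases c) (auto simp: ring_gen_0 intro: ring_gen.one)

lemma is_ring_hom_apply: "is_ring_hom (\<lambda>v::T. v i)"
  by (simp add: is_ring_hom_def)


section \<open>The polynomial ring k[s,t]\<close>

type_synonym st_poly = "bit poly poly"

definition s_var :: st_poly where "s_var = [:[:0, 1:]:]"
definition t_var :: st_poly where "t_var = [:0, 1:]"

lemma var_s_to_fract: "var_s = to_fract s_var"
  and var_t_to_fract: "var_t = to_fract t_var"
  by (simp_all add: var_s_def var_t_def to_fract_def s_var_def t_var_def)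

lemma to_fract_power: "to_fract (p ^ n) = to_fract p ^ n"
  by (induct n) simp_all

lemma to_fract_const_const: "to_fract [:[:b:]:] = kemb b"
  by (cases b) (auto simp: kemb_def to_fract_def Zero_fract_def One_fract_def one_pCons)

lemma to_fract_const_eq_eval: "to_fract [:q:] = poly (map_poly kemb q) var_s"
proof (induct q)
  case (pCons b q)
  have "[:pCons b q:] = [:[:b:]:] + s_var * [:q:]"
    by (simp add: s_var_def)
  then have "to_fract [:pCons b q:] = kemb b + var_s * to_fract [:q:]"
    by (simp only: to_fract_add to_fract_mult to_fract_const_const var_s_to_fract)
  then show ?case using pCons by (simp add: map_poly_pCons)
qed simp

lemma to_fract_eq_eval: "to_fract p = poly (map_poly (\<lambda>q. poly (map_poly kemb q) var_s) p) var_t"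
proof (induct p)
  case (pCons a p)
  have "pCons a p = [:a:] + t_var * p"
    by (simp add: t_var_def)
  then have "to_fract (pCons a p) = to_fract [:a:] + var_t * to_fract p"
    by (simp only: to_fract_add to_fract_mult var_t_to_fract)
  then show ?case using pCons by (simp add: map_poly_pCons to_fract_const_eq_eval)
qed simp

definition coeff_s0 :: "st_poly \<Rightarrow> bit poly" where "coeff_s0 p = map_poly (\<lambda>q. coeff q 0) p"
definition coeff_s1 :: "st_poly \<Rightarrow> bit poly" where "coeff_s1 p = map_poly (\<lambda>q. coeff q 1) p"
definition s_const :: "bit poly \<Rightarrow> st_poly" where "s_const a = map_poly (\<lambda>b. [:b:]) a"
definition div_s2 :: "st_poly \<Rightarrow> st_poly" where "div_s2 p = map_poly (poly_shift 2) p"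
definition div_s :: "st_poly \<Rightarrow> st_poly" where "div_s p = map_poly (poly_shift 1) p"

lemma coeff_coeff_s0: "coeff (coeff_s0 p) n = coeff (coeff p n) 0"
  and coeff_coeff_s1: "coeff (coeff_s1 p) n = coeff (coeff p n) 1"
  and coeff_s_const: "coeff (s_const a) n = [:coeff a n:]"
  and coeff_div_s2: "coeff (div_s2 p) n = poly_shift 2 (coeff p n)"
  by (simp_all add: coeff_s0_def coeff_s1_def s_const_def div_s2_def coeff_map_poly)

lemma is_ring_hom_coeff_0: "is_ring_hom (\<lambda>q::'a::comm_ring_1 poly. coeff q 0)"
  by (simp add: is_ring_hom_def coeff_mult_0)

lemma coeff_s0_add: "coeff_s0 (p + q) = coeff_s0 p + coeff_s0 q"
  and coeff_s1_add: "coeff_s1 (p + q) = coeff_s1 p + coeff_s1 q"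
  by (rule poly_eqI, simp add: coeff_coeff_s0 coeff_coeff_s1)+

lemma coeff_s0_mult: "coeff_s0 (p * q) = coeff_s0 p * coeff_s0 q"
  unfolding coeff_s0_def by (rule map_poly_mult_ring_hom[OF is_ring_hom_coeff_0])

lemma coeff_1_mult:
  "coeff ((a::'a::comm_semiring_1 poly) * b) 1 = coeff a 1 * coeff b 0 + coeff a 0 * coeff b 1"
  by (simp add: coeff_mult atMost_Suc add.commute)

lemma map_poly_coeff_1_mult:
  fixes p q :: "'a::comm_semiring_1 poly poly"
  defines "c0 \<equiv> map_poly (\<lambda>r. coeff r 0)" and "c1 \<equiv> map_poly (\<lambda>r. coeff r 1)"
  shows "c1 (p * q) = c1 p * c0 q + c0 p * c1 q"
proof (rule poly_eqI)
  fix n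
  have "coeff (c1 (p * q)) n = (\<Sum>i\<le>n. coeff (coeff p i * coeff q (n - i)) 1)"
    by (simp add: c1_def coeff_map_poly coeff_mult coeff_sum)
  also have "\<dots> = (\<Sum>i\<le>n. coeff (coeff p i) 1 * coeff (coeff q (n - i)) 0
      + coeff (coeff p i) 0 * coeff (coeff q (n - i)) 1)"
    by (simp only: coeff_1_mult)
  also have "\<dots> = coeff (c1 p * c0 q + c0 p * c1 q) n"
    by (simp add: c0_def c1_def coeff_mult sum.distrib coeff_map_poly)
  finally show "coeff (c1 (p * q)) n = coeff (c1 p * c0 q + c0 p * c1 q) n" .
qed

lemma coeff_s1_mult: "coeff_s1 (p * q) = coeff_s1 p * coeff_s0 q + coeff_s0 p * coeff_s1 q"
  unfolding coeff_s0_def coeff_s1_def by (rule map_poly_coeff_1_mult)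

lemma coeff_s0_0 [simp]: "coeff_s0 0 = 0"
  and coeff_s1_0 [simp]: "coeff_s1 0 = 0"
  and coeff_s0_1 [simp]: "coeff_s0 1 = 1"
  and coeff_s1_1 [simp]: "coeff_s1 1 = 0"
  and coeff_s0_s_var [simp]: "coeff_s0 s_var = 0"
  and coeff_s1_s_var [simp]: "coeff_s1 s_var = 1"
  and coeff_s0_s_const [simp]: "coeff_s0 (s_const a) = a"
  and coeff_s1_s_const [simp]: "coeff_s1 (s_const a) = 0"
  by (rule poly_eqI; simp add: coeff_coeff_s0 coeff_coeff_s1 coeff_s_const coeff_1 s_var_def
      coeff_pCons split: nat.split)+

lemma coeff_s1_t_var: "coeff_s1 t_var = 0"
  by (rule poly_eqI) (simp add: coeff_coeff_s1 t_var_def coeff_pCons split: nat.split)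

lemma coeff_s_var_mult [simp]: "coeff_s0 (s_var * p) = 0" "coeff_s1 (s_var * s_const a) = a"
    "coeff_s0 (s_var ^ 2 * p) = 0" "coeff_s1 (s_var ^ 2 * p) = 0"
    "coeff_s0 (s_var ^ 2) = 0" "coeff_s1 (s_var ^ 2) = 0"
  by (simp_all add: coeff_s0_mult coeff_s1_mult power2_eq_square)

lemma s_const_0 [simp]: "s_const 0 = 0"
  and s_const_1 [simp]: "s_const 1 = 1"
  by (simp_all add: s_const_def)

lemma is_ring_hom_s_const: "is_ring_hom s_const"
  unfolding s_const_def is_ring_hom_def
  by (auto intro!: map_poly_add_ring_hom map_poly_mult_ring_hom simp: is_ring_hom_def)

lemma s_const_add: "s_const (a + b) = s_const a + s_const b"
  and s_const_mult: "s_const (a * b) = s_const a * s_const b"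
  using is_ring_hom_s_const by (simp_all add: ring_hom_add ring_hom_mult)

lemma bit_poly_expansion:
  "(q::bit poly) = [:coeff q 0:] + [:0, 1:] * [:coeff q 1:] + [:0, 1:] ^ 2 * poly_shift 2 q"
proof (rule poly_eqI)
  fix n
  show "coeff q n = coeff ([:coeff q 0:] + [:0, 1:] * [:coeff q 1:] + [:0, 1:] ^ 2 * poly_shift 2 q) n"
    by (cases n; cases "n - 1") (auto simp: coeff_pCons power2_eq_square coeff_poly_shift numeral_2_eq_2)
qed

lemma s_expansion: "p = s_const (coeff_s0 p) + s_var * s_const (coeff_s1 p) + s_var ^ 2 * div_s2 p"
proof (rule poly_eqI)
  fix n
  have "s_var ^ 2 = [:[:0, 1:] ^ 2:]"
    by (simp add: s_var_def power2_eq_square)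
  then show "coeff p n = coeff (s_const (coeff_s0 p) + s_var * s_const (coeff_s1 p) + s_var ^ 2 * div_s2 p) n"
    using bit_poly_expansion[of "coeff p n"]
    by (simp add: coeff_s_const coeff_coeff_s0 coeff_coeff_s1 coeff_div_s2 s_var_def)
qed

lemma s_var_mult_div_s: "coeff_s0 p = 0 \<Longrightarrow> p = s_var * div_s p"
proof (rule poly_eqI)
  fix n assume "coeff_s0 p = 0"
  then have "coeff (coeff p n) 0 = 0"
    by (metis coeff_0 coeff_coeff_s0)
  moreover have "q = [:0, 1:] * poly_shift 1 q" if "coeff q 0 = 0" for q :: "bit poly"
    by (rule poly_eqI) (use that in \<open>simp add: coeff_poly_shift coeff_pCons split: nat.split\<close>)
  ultimately show "coeff p n = coeff (s_var * div_s p) n"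
    by (simp add: s_var_def div_s_def coeff_map_poly)
qed

lemma coeff_s0_div_s: "coeff_s0 (div_s p) = coeff_s1 p"
  by (rule poly_eqI) (simp add: coeff_coeff_s0 coeff_coeff_s1 div_s_def coeff_map_poly coeff_poly_shift)

lemma coeff_s1_div_s_eq_0: "p = 0 \<Longrightarrow> coeff_s1 (div_s p) = 0"
  by (simp add: div_s_def)


section \<open>k[s,t] is integrally closed\<close>

instantiation bit ::
  "{unique_euclidean_ring, normalization_euclidean_semiring, normalization_semidom_multiplicative}"
begin
definition [simp]: "normalize_bit = (normalize_field :: bit \<Rightarrow> _)"
definition [simp]: "unit_factor_bit = (unit_factor_field :: bit \<Rightarrow> _)"
definition [simp]: "euclidean_size_bit = (euclidean_size_field :: bit \<Rightarrow> _)"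
definition [simp]: "division_segment (x :: bit) = 1"
instance
  by standard (auto simp add: dvd_field_iff field_split_simps split: if_splits)
end

instantiation bit :: euclidean_ring_gcd
begin
definition gcd_bit :: "bit \<Rightarrow> bit \<Rightarrow> bit" where "gcd_bit = Euclidean_Algorithm.gcd"
definition lcm_bit :: "bit \<Rightarrow> bit \<Rightarrow> bit" where "lcm_bit = Euclidean_Algorithm.lcm"
definition Gcd_bit :: "bit set \<Rightarrow> bit" where "Gcd_bit = Euclidean_Algorithm.Gcd"
definition Lcm_bit :: "bit set \<Rightarrow> bit" where "Lcm_bit = Euclidean_Algorithm.Lcm"
instance by standard (simp_all add: gcd_bit_def lcm_bit_def Gcd_bit_def Lcm_bit_def)
end

instance bit :: field_gcd ..

lemma Fract_power: "Fract a b ^ n = Fract (a ^ n) (b ^ n)"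
  by (induct n) (simp_all add: One_fract_def)

text \<open>Rational root test: write q = a/b in lowest terms; clearing denominators shows b | a^n.\<close>

lemma integral_fract_in_range_to_fract:
  fixes q :: "'a::{ring_gcd,idom_divide,semiring_gcd_mult_normalize} fract"
  assumes eq: "q ^ n + (\<Sum>i<n. to_fract (d i) * q ^ i) = 0"
  shows "\<exists>p. q = to_fract p"
proof -
  obtain a b where ab: "quot_of_fract q = (a, b)" by (cases "quot_of_fract q")
  have nf: "(a, b) \<in> normalized_fracts"
    using quot_of_fract_in_normalized_fracts[of q] ab by simp
  then have cop: "coprime a b" and ub: "unit_factor b = 1" and b0: "b \<noteq> 0"
    by (auto simp: normalized_fracts_def)
  have q: "q = Fract a b"
    using quot_to_fract_quot_of_fract[of q] ab by (simp add: quot_to_fract_def)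
  have term_i: "Fract (b ^ n) 1 * (to_fract (d i) * q ^ i) = to_fract (d i * a ^ i * b ^ (n - i))"
    if "i < n" for i
  proof -
    have "b ^ n = b ^ i * b ^ (n - i)" using that by (simp add: power_add[symmetric])
    then show ?thesis using b0
      by (simp add: q Fract_power to_fract_def eq_fract mult.assoc mult.left_commute)
  qed
  have term_n: "Fract (b ^ n) 1 * q ^ n = to_fract (a ^ n)"
    using b0 by (simp add: q Fract_power to_fract_def eq_fract mult.commute)
  have "to_fract (a ^ n + (\<Sum>i<n. d i * a ^ i * b ^ (n - i)))
      = Fract (b ^ n) 1 * (q ^ n + (\<Sum>i<n. to_fract (d i) * q ^ i))"
    by (simp add: distrib_left sum_distrib_left term_n term_i)
  also have "\<dots> = 0"
    using eq by (simp only: mult_zero_right)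
  finally have cleared: "a ^ n + (\<Sum>i<n. d i * a ^ i * b ^ (n - i)) = 0"
    by (simp only: to_fract_eq_0_iff)
  have "b dvd (\<Sum>i<n. d i * a ^ i * b ^ (n - i))"
  proof (rule dvd_sum)
    fix i assume "i \<in> {..<n}"
    then have "b ^ (n - i) = b * b ^ (n - i - 1)" by (cases "n - i") auto
    then show "b dvd d i * a ^ i * b ^ (n - i)" by simp
  qed
  then have "b dvd a ^ n"
    using cleared by (metis add_eq_0_iff dvd_minus_iff)
  moreover have "coprime (a ^ n) b"
    using cop by simp
  ultimately have "is_unit b"
    using coprime_common_divisor[of "a ^ n" b b] by simp
  then have "b = 1"
    using ub by (metis is_unit_normalize unit_factor_1_imp_normalized)
  then show ?thesis
    using q by (auto simp: to_fract_def)
qed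

lemma integral_over_constants_degree_0:
  fixes p :: "'a::idom poly" and d :: "nat \<Rightarrow> 'a poly"
  assumes eq: "p ^ n + (\<Sum>i<n. d i * p ^ i) = 0" and d: "\<forall>i<n. degree (d i) = 0"
  shows "degree p = 0"
proof (rule ccontr)
  assume "degree p \<noteq> 0"
  then have m: "degree p > 0" and p0: "p \<noteq> 0" by auto
  define N where "N = n * degree p"
  have lead: "coeff (p ^ n) N = lead_coeff p ^ n"
    using p0 by (simp add: N_def degree_power_eq lead_coeff_power[symmetric])
  have lower: "coeff (d i * p ^ i) N = 0" if "i < n" for i
  proof (rule coeff_eq_0)
    have "degree (d i * p ^ i) \<le> degree (d i) + degree (p ^ i)" by (rule degree_mult_le)
    also have "\<dots> \<le> i * degree p" using d that degree_power_le[of p i] by (simp add: mult.commute)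
    also have "\<dots> < N" using that m by (simp add: N_def)
    finally show "degree (d i * p ^ i) < N" .
  qed
  have "coeff (p ^ n + (\<Sum>i<n. d i * p ^ i)) N = lead_coeff p ^ n"
    by (simp add: coeff_sum lead lower)
  then show False
    using eq p0 by simp
qed


section \<open>Triples of polynomials and glued subrings\<close>

definition triple :: "(cmp \<Rightarrow> st_poly) \<Rightarrow> T" where
  "triple g = (\<lambda>i. to_fract (g i))"

definition s_polys :: "st_poly set" where
  "s_polys = {p. degree p = 0}"

definition admissible :: "st_poly set \<Rightarrow> bool" where
  "admissible D \<longleftrightarrow> D = UNIV \<or> D = s_polys"

definition triples :: "st_poly set \<Rightarrow> T set" where
  "triples D = {triple g | g. \<forall>i. g i \<in> D}"

text \<open>D = UNIV gives the overrings of R that occur below, D = s_polys (no t) those of A.\<close>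

definition glued :: "st_poly set \<Rightarrow> bit poly set \<Rightarrow> T set" where
  "glued D I = {triple g | g. (\<forall>i. g i \<in> D) \<and> coeff_s0 (g C2) = coeff_s0 (g C1)
     \<and> coeff_s0 (g C3) = coeff_s0 (g C1) \<and> coeff_s1 (g C1) + coeff_s1 (g C2) + coeff_s1 (g C3) \<in> I}"

definition glue_ideal :: "st_poly set \<Rightarrow> bit poly set \<Rightarrow> bool" where
  "glue_ideal D I \<longleftrightarrow> 0 \<in> I \<and> (\<forall>x\<in>I. \<forall>y\<in>I. x + y \<in> I) \<and> (\<forall>p\<in>D. \<forall>x\<in>I. coeff_s0 p * x \<in> I)"

lemma triple_apply [simp]: "triple g i = to_fract (g i)"
  by (simp add: triple_def)

lemma triple_add: "triple g + triple h = triple (\<lambda>i. g i + h i)"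
  and triple_mult: "triple g * triple h = triple (\<lambda>i. g i * h i)"
  and triple_1: "1 = triple (\<lambda>_. 1)"
  and triple_0: "0 = triple (\<lambda>_. 0)"
  by (rule ext, simp)+

lemma triple_inj: "triple g = triple h \<longleftrightarrow> g = h"
  by (auto simp: fun_eq_iff triple_def)

lemma cmp_all: "(\<forall>i. P i) \<longleftrightarrow> P C1 \<and> P C2 \<and> P C3"
  by (metis cmp.exhaust)

lemma xx_triple: "xx = triple (\<lambda>i. case i of C1 \<Rightarrow> 0 | C2 \<Rightarrow> s_var | C3 \<Rightarrow> s_var)"
  and yy_triple: "yy = triple (\<lambda>i. case i of C1 \<Rightarrow> s_var | C2 \<Rightarrow> 0 | C3 \<Rightarrow> s_var)"
  and xx_plus_yy_triple: "xx + yy = triple (\<lambda>i. case i of C1 \<Rightarrow> s_var | C2 \<Rightarrow> s_var | C3 \<Rightarrow> 0)"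
  and zz_triple: "zz = triple (\<lambda>i. t_var)"
  and rho_triple: "rho = triple (\<lambda>i. case i of C1 \<Rightarrow> s_var | C2 \<Rightarrow> 0 | C3 \<Rightarrow> 0)"
  by (rule ext; simp add: xx_def yy_def zz_def rho_def var_s_to_fract var_t_to_fract K_uminus
      K_add_self split: cmp.split)+

lemma admissible_closed:
  assumes "admissible D"
  shows "0 \<in> D" "1 \<in> D" "a \<in> D \<Longrightarrow> b \<in> D \<Longrightarrow> a + b \<in> D" "a \<in> D \<Longrightarrow> b \<in> D \<Longrightarrow> a * b \<in> D"
  using assms degree_add_le[of a 0 b] degree_mult_le[of a b] by (auto simp: admissible_def s_polys_def)

lemma glued_mem:
  "triple g \<in> glued D I \<longleftrightarrow> (\<forall>i. g i \<in> D) \<and> coeff_s0 (g C2) = coeff_s0 (g C1)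
     \<and> coeff_s0 (g C3) = coeff_s0 (g C1) \<and> coeff_s1 (g C1) + coeff_s1 (g C2) + coeff_s1 (g C3) \<in> I"
  by (auto simp: glued_def triple_inj)

lemma triples_mem: "triple g \<in> triples D \<longleftrightarrow> (\<forall>i. g i \<in> D)"
  by (auto simp: triples_def triple_inj)

lemma triples_component: "v \<in> triples D \<Longrightarrow> \<exists>p\<in>D. v j = to_fract p"
  by (auto simp: triples_def)

lemma glued_subset_triples: "glued D I \<subseteq> triples D"
  by (auto simp: glued_def triples_def)

lemma glued_mono: "I \<subseteq> J \<Longrightarrow> glued D I \<subseteq> glued D J"
  by (auto simp: glued_def)

lemma glued_1: "admissible D \<Longrightarrow> glue_ideal D I \<Longrightarrow> 1 \<in> glued D I"
  unfolding triple_1 glued_mem by (simp add: admissible_closed glue_ideal_def)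

lemma glued_add:
  assumes "admissible D" "glue_ideal D I" "v \<in> glued D I" "w \<in> glued D I"
  shows "v + w \<in> glued D I"
proof -
  obtain g h where v: "v = triple g" and w: "w = triple h"
    using assms(3,4) by (auto simp: glued_def)
  have "coeff_s1 (g C1 + h C1) + coeff_s1 (g C2 + h C2) + coeff_s1 (g C3 + h C3)
      = (coeff_s1 (g C1) + coeff_s1 (g C2) + coeff_s1 (g C3))
        + (coeff_s1 (h C1) + coeff_s1 (h C2) + coeff_s1 (h C3))"
    by (simp add: coeff_s1_add algebra_simps)
  then show ?thesis
    using assms admissible_closed[OF assms(1)] unfolding v w triple_add glued_mem glue_ideal_def
    by (auto simp: coeff_s0_add)
qed

lemma glued_mult:
  assumes "admissible D" "glue_ideal D I" "v \<in> glued D I" "w \<in> glued D I"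
  shows "v * w \<in> glued D I"
proof -
  obtain g h where v: "v = triple g" and w: "w = triple h"
    using assms(3,4) by (auto simp: glued_def)
  from assms(3,4) have g: "\<forall>i. g i \<in> D" "coeff_s0 (g C2) = coeff_s0 (g C1)" "coeff_s0 (g C3) = coeff_s0 (g C1)"
      "coeff_s1 (g C1) + coeff_s1 (g C2) + coeff_s1 (g C3) \<in> I"
    and h: "\<forall>i. h i \<in> D" "coeff_s0 (h C2) = coeff_s0 (h C1)" "coeff_s0 (h C3) = coeff_s0 (h C1)"
      "coeff_s1 (h C1) + coeff_s1 (h C2) + coeff_s1 (h C3) \<in> I"
    unfolding v w glued_mem by auto
  have "coeff_s1 (g C1 * h C1) + coeff_s1 (g C2 * h C2) + coeff_s1 (g C3 * h C3)
      = coeff_s0 (h C1) * (coeff_s1 (g C1) + coeff_s1 (g C2) + coeff_s1 (g C3))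
        + coeff_s0 (g C1) * (coeff_s1 (h C1) + coeff_s1 (h C2) + coeff_s1 (h C3))"
    using g h by (simp add: coeff_s1_mult algebra_simps)
  moreover have "coeff_s0 (h C1) * (coeff_s1 (g C1) + coeff_s1 (g C2) + coeff_s1 (g C3)) \<in> I"
      "coeff_s0 (g C1) * (coeff_s1 (h C1) + coeff_s1 (h C2) + coeff_s1 (h C3)) \<in> I"
    using g h assms(2) by (auto simp: glue_ideal_def)
  ultimately show ?thesis
    using assms(2) g h admissible_closed[OF assms(1)] unfolding v w triple_mult glued_mem glue_ideal_def
    by (auto simp: coeff_s0_mult)
qed

lemma glued_uminus: "v \<in> glued D I \<Longrightarrow> - v \<in> glued D I"
  by (simp add: T_uminus)

lemma ring_gen_subset_glued:
  assumes "admissible D" "glue_ideal D I" "S \<subseteq> glued D I"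
  shows "ring_gen S \<subseteq> glued D I"
proof
  fix x assume "x \<in> ring_gen S"
  then show "x \<in> glued D I"
    by (induct rule: ring_gen.induct)
      (use assms in \<open>blast intro: glued_add glued_mult glued_uminus glued_1\<close>)+
qed

lemma glue_ideal_0: "glue_ideal D {0}"
  and glue_ideal_UNIV: "glue_ideal D UNIV"
  by (simp_all add: glue_ideal_def)

lemma s_polys_const: "[:q:] \<in> s_polys"
  and s_var_in_s_polys: "s_var \<in> s_polys"
  by (simp_all add: s_polys_def s_var_def)

lemma s_polys_eq_const: "p \<in> s_polys \<Longrightarrow> p = [:coeff p 0:]"
  unfolding s_polys_def mem_Collect_eq by (rule sym, rule degree_0_id)

lemma coeff_s_s_polys:
  assumes "p \<in> s_polys"
  shows "coeff_s0 p = [:coeff (coeff p 0) 0:]" "coeff_s1 p = [:coeff (coeff p 0) 1:]"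
    "div_s2 p = [:poly_shift 2 (coeff p 0):]"
proof -
  obtain c where "p = [:c:]"
    using s_polys_eq_const[OF assms] by blast
  then show "coeff_s0 p = [:coeff (coeff p 0) 0:]" "coeff_s1 p = [:coeff (coeff p 0) 1:]"
      "div_s2 p = [:poly_shift 2 (coeff p 0):]"
    by (simp_all add: coeff_s0_def coeff_s1_def div_s2_def map_poly_pCons)
qed

lemma s_const_in_s_polys: "degree a = 0 \<Longrightarrow> s_const a \<in> s_polys"
  by (simp add: s_polys_def s_const_def degree_map_poly)

lemma div_s_in_s_polys: "p \<in> s_polys \<Longrightarrow> div_s p \<in> s_polys"
  using map_poly_degree_leq[of "poly_shift 1" p] by (simp add: s_polys_def div_s_def)

lemma admissible_UNIV: "admissible UNIV"
  and admissible_s_polys: "admissible s_polys"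
  by (simp_all add: admissible_def)

lemma UNIV_neq_s_polys: "UNIV \<noteq> s_polys"
proof
  assume "UNIV = s_polys"
  then have "t_var \<in> s_polys" by (metis UNIV_I)
  then show False by (simp add: s_polys_def t_var_def)
qed

lemma admissible_s_const_coeff_s0: "admissible D \<Longrightarrow> p \<in> D \<Longrightarrow> s_const (coeff_s0 p) \<in> D"
  by (auto simp: admissible_def coeff_s_s_polys s_const_def map_poly_pCons s_polys_const)

lemma admissible_s_var_power: "admissible D \<Longrightarrow> s_var ^ 2 \<in> D"
  by (auto simp: admissible_def s_polys_def s_var_def power2_eq_square)

lemma xx_glued: "admissible D \<Longrightarrow> xx \<in> glued D {0}"
  and yy_glued: "admissible D \<Longrightarrow> yy \<in> glued D {0}"
  unfolding xx_triple yy_triple glued_mem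
  using s_var_in_s_polys s_polys_const[of 0] by (auto simp: admissible_def bit_poly_two cmp_all)

lemma zz_glued: "zz \<in> glued UNIV {0}"
  unfolding zz_triple glued_mem by (simp add: coeff_s1_t_var)


section \<open>R and A as glued subrings\<close>

definition eval_z :: "bit poly \<Rightarrow> T" where
  "eval_z a = poly (map_poly kemb a) zz"

definition eval_sz :: "T \<Rightarrow> st_poly \<Rightarrow> T" where
  "eval_sz w p = poly (map_poly (\<lambda>q. poly (map_poly kemb q) w) p) zz"

lemma poly_map_poly_apply:
  "f 0 = 0 \<Longrightarrow> (poly (map_poly f p) (x::T)) i = poly (map_poly (\<lambda>c. f c i) p) (x i)"
  using ring_hom_poly_map_poly[of "\<lambda>v. v i" f p x, OF is_ring_hom_apply] by (simp add: o_def)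

lemma eval_z_apply: "eval_z a i = to_fract (s_const a)"
proof -
  have "eval_z a i = poly (map_poly kemb a) var_t"
    unfolding eval_z_def by (subst poly_map_poly_apply) (simp_all add: zz_def kemb_apply)
  also have "\<dots> = to_fract (s_const a)"
    unfolding to_fract_eq_eval s_const_def by (subst map_poly_map_poly) (simp_all add: o_def map_poly_pCons)
  finally show ?thesis .
qed

lemma eval_z_triple: "eval_z a = triple (\<lambda>_. s_const a)"
  by (rule ext) (simp add: eval_z_apply)

lemma eval_sz_apply: "w i = var_s \<Longrightarrow> eval_sz w p i = to_fract p"
  unfolding eval_sz_def to_fract_eq_eval
  by (subst poly_map_poly_apply) (simp_all add: zz_def poly_map_poly_apply kemb_apply)

lemma eval_z_const: "eval_z [:b:] = kemb b"
  by (simp add: eval_z_def map_poly_pCons)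

lemma eval_z_in_ring_gen: "zz \<in> ring_gen S \<Longrightarrow> eval_z a \<in> ring_gen S"
  unfolding eval_z_def by (rule poly_map_poly_in_ring_gen) (auto simp: kemb_in_ring_gen)

lemma eval_sz_in_ring_gen: "zz \<in> ring_gen S \<Longrightarrow> w \<in> ring_gen S \<Longrightarrow> eval_sz w p \<in> ring_gen S"
  unfolding eval_sz_def
  by (rule poly_map_poly_in_ring_gen) (auto intro!: poly_map_poly_in_ring_gen simp: kemb_in_ring_gen)

lemma eval_sz_const_in_ring_gen: "w \<in> ring_gen S \<Longrightarrow> eval_sz w [:q:] \<in> ring_gen S"
  unfolding eval_sz_def by (simp add: map_poly_pCons poly_map_poly_in_ring_gen kemb_in_ring_gen)

lemma is_ring_hom_eval_z: "is_ring_hom eval_z"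
  unfolding eval_z_def[abs_def] by (rule is_ring_hom_poly_map_poly[OF is_ring_hom_kemb_T])

lemma zz_eq_eval_z: "zz = eval_z [:0, 1:]"
  by (simp add: eval_z_def map_poly_pCons)

lemma xx_in_RR: "xx \<in> RR" and yy_in_RR: "yy \<in> RR" and zz_in_RR: "zz \<in> RR"
  and xx_in_AA: "xx \<in> AA" and yy_in_AA: "yy \<in> AA"
  by (auto simp: RR_def AA_def intro: ring_gen.gen)

lemma RR_closed: "a \<in> RR \<Longrightarrow> b \<in> RR \<Longrightarrow> a + b \<in> RR" "a \<in> RR \<Longrightarrow> b \<in> RR \<Longrightarrow> a * b \<in> RR"
    "0 \<in> RR" "1 \<in> RR"
  and AA_closed: "a \<in> AA \<Longrightarrow> b \<in> AA \<Longrightarrow> a + b \<in> AA" "a \<in> AA \<Longrightarrow> b \<in> AA \<Longrightarrow> a * b \<in> AA"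
    "0 \<in> AA" "1 \<in> AA"
  unfolding RR_def AA_def by (auto intro: ring_gen.intros ring_gen_0)

lemma to_fract_s_expansion:
  "to_fract p = to_fract (s_const (coeff_s0 p)) + var_s * to_fract (s_const (coeff_s1 p))
     + var_s ^ 2 * to_fract (div_s2 p)"
  by (subst s_expansion) (simp only: to_fract_add to_fract_mult to_fract_power var_s_to_fract)

text \<open>Explicit preimage in k[x,y,z] of a glued triple g: on the line x = 0 the factor y(x + y)
  becomes s^2, and similarly on the other two lines.\<close>

lemma glued_0_expansion:
  assumes "coeff_s0 (g C2) = coeff_s0 (g C1)" "coeff_s0 (g C3) = coeff_s0 (g C1)"
    "coeff_s1 (g C1) + coeff_s1 (g C2) + coeff_s1 (g C3) = 0"
  shows "triple g = eval_z (coeff_s0 (g C1)) + yy * eval_z (coeff_s1 (g C1)) + xx * eval_z (coeff_s1 (g C2))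
     + yy * (xx + yy) * eval_sz yy (div_s2 (g C1)) + xx * (xx + yy) * eval_sz xx (div_s2 (g C2))
     + xx * yy * eval_sz xx (div_s2 (g C3))"
proof (rule ext)
  fix i
  have s1_C3: "coeff_s1 (g C3) = coeff_s1 (g C1) + coeff_s1 (g C2)"
    using assms(3) by (metis add_eq_0_iff bit_poly_uminus add.commute)
  have components: "xx C1 = 0" "xx C2 = var_s" "xx C3 = var_s" "yy C1 = var_s" "yy C2 = 0" "yy C3 = var_s"
    by (simp_all add: xx_def yy_def K_uminus)
  have ss: "var_s + var_s = 0"
    by (rule K_add_self)
  show "triple g i = (eval_z (coeff_s0 (g C1)) + yy * eval_z (coeff_s1 (g C1)) + xx * eval_z (coeff_s1 (g C2))
     + yy * (xx + yy) * eval_sz yy (div_s2 (g C1)) + xx * (xx + yy) * eval_sz xx (div_s2 (g C2))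
     + xx * yy * eval_sz xx (div_s2 (g C3))) i"
  proof (cases i)
    case C1
    then show ?thesis
      by (simp add: components eval_z_apply eval_sz_apply to_fract_s_expansion[of "g C1"]
          power2_eq_square algebra_simps)
  next
    case C2
    then show ?thesis
      using assms by (simp add: components eval_z_apply eval_sz_apply to_fract_s_expansion[of "g C2"]
          power2_eq_square algebra_simps)
  next
    case C3
    then show ?thesis
      using assms by (simp add: components eval_z_apply eval_sz_apply to_fract_s_expansion[of "g C3"]
          power2_eq_square s1_C3 s_const_add ss algebra_simps K_two)
  qed
qed

lemma RR_eq_glued: "RR = glued UNIV {0}"
proof
  show "RR \<subseteq> glued UNIV {0}"
    unfolding RR_def
    by (rule ring_gen_subset_glued[OF admissible_UNIV glue_ideal_0])
      (auto simp: xx_glued yy_glued zz_glued admissible_UNIV)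
  show "glued UNIV {0} \<subseteq> RR"
  proof
    fix v assume "v \<in> glued UNIV {0}"
    then obtain g where v: "v = triple g" and h: "coeff_s0 (g C2) = coeff_s0 (g C1)"
        "coeff_s0 (g C3) = coeff_s0 (g C1)" "coeff_s1 (g C1) + coeff_s1 (g C2) + coeff_s1 (g C3) = 0"
      by (auto simp: glued_def)
    have evals: "eval_z a \<in> RR" "w \<in> RR \<Longrightarrow> eval_sz w p \<in> RR" for a w p
      unfolding RR_def by (auto intro: eval_z_in_ring_gen eval_sz_in_ring_gen ring_gen.gen)
    show "v \<in> RR"
      unfolding v glued_0_expansion[OF h] by (intro RR_closed xx_in_RR yy_in_RR evals)
  qed
qed

lemma AA_eq_glued: "AA = glued s_polys {0}"
proof
  show "AA \<subseteq> glued s_polys {0}"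
    unfolding AA_def
    by (rule ring_gen_subset_glued[OF admissible_s_polys glue_ideal_0])
      (auto simp: xx_glued yy_glued admissible_s_polys)
  show "glued s_polys {0} \<subseteq> AA"
  proof
    fix v assume "v \<in> glued s_polys {0}"
    then obtain g where v: "v = triple g" and D: "\<forall>i. g i \<in> s_polys" and h: "coeff_s0 (g C2) = coeff_s0 (g C1)"
        "coeff_s0 (g C3) = coeff_s0 (g C1)" "coeff_s1 (g C1) + coeff_s1 (g C2) + coeff_s1 (g C3) = 0"
      by (auto simp: glued_def)
    have evals: "eval_z (coeff_s0 (g i)) \<in> AA" "eval_z (coeff_s1 (g i)) \<in> AA"
        "w \<in> AA \<Longrightarrow> eval_sz w (div_s2 (g i)) \<in> AA" for i w
      using D unfolding AA_def
      by (simp_all add: coeff_s_s_polys eval_z_const kemb_in_ring_gen eval_sz_const_in_ring_gen)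
    show "v \<in> AA"
      unfolding v glued_0_expansion[OF h] by (intro AA_closed xx_in_AA yy_in_AA evals)
  qed
qed


section \<open>Non-zerodivisors and integral closure of glued rings\<close>

definition is_subring :: "T set \<Rightarrow> bool" where
  "is_subring B \<longleftrightarrow> 0 \<in> B \<and> 1 \<in> B \<and> (\<forall>a\<in>B. \<forall>b\<in>B. a + b \<in> B \<and> a * b \<in> B \<and> - a \<in> B)"

lemma is_subring_glued: "admissible D \<Longrightarrow> glue_ideal D I \<Longrightarrow> is_subring (glued D I)"
  unfolding is_subring_def using glued_add glued_mult glued_uminus glued_1
  by (metis add_0 add.right_inverse)

lemma glued_lift_component:
  assumes "admissible D" "p \<in> D"
  shows "\<exists>w\<in>glued D {0}. w i = to_fract p"
proof -
  define i' where "i' = (if i = C1 then C2 else C1)"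
  define g where "g = (\<lambda>j. if j = i' then s_const (coeff_s0 p) else p)"
  have "triple g \<in> glued D {0}"
    unfolding glued_mem using assms admissible_s_const_coeff_s0[OF assms]
    by (cases i; auto simp: g_def i'_def bit_poly_add_self)
  moreover have "triple g i = to_fract p"
    by (simp add: g_def i'_def)
  ultimately show ?thesis by blast
qed

lemma s_var_square_at_glued:
  "admissible D \<Longrightarrow> triple (\<lambda>j. if j = i then s_var ^ 2 else 0) \<in> glued D {0}"
  unfolding glued_mem using admissible_s_var_power[of D] admissible_closed(1)[of D]
  by (cases i) auto

lemma s_var_square_glued: "admissible D \<Longrightarrow> triple (\<lambda>j. s_var ^ 2) \<in> glued D {0}"
  unfolding glued_mem using admissible_s_var_power[of D] by simp

lemma s_var_square_neq_0: "s_var ^ 2 \<noteq> 0"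
  by (simp add: s_var_def)

lemma nzd_glued:
  assumes "admissible D" "glued D {0} \<subseteq> B" "B \<subseteq> triples D"
  shows "nzd B = {b \<in> B. \<forall>i. b i \<noteq> 0}"
proof
  show "nzd B \<subseteq> {b \<in> B. \<forall>i. b i \<noteq> 0}"
  proof
    fix a assume a: "a \<in> nzd B"
    have "a i \<noteq> 0" for i
    proof
      assume ai: "a i = 0"
      let ?e = "triple (\<lambda>j. if j = i then s_var ^ 2 else 0)"
      have "?e \<in> B" "a * ?e = 0" "?e \<noteq> 0"
        using s_var_square_at_glued[OF assms(1)] assms(2) ai s_var_square_neq_0
        by (auto simp: fun_eq_iff)
      then show False using a by (auto simp: nzd_def)
    qed
    then show "a \<in> {b \<in> B. \<forall>i. b i \<noteq> 0}" using a by (auto simp: nzd_def)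
  qed
  show "{b \<in> B. \<forall>i. b i \<noteq> 0} \<subseteq> nzd B"
    by (auto simp: nzd_def fun_eq_iff)
qed

lemma int_closure_glued_subset:
  assumes "admissible D" "B \<subseteq> triples D"
  shows "int_closure B \<subseteq> triples D"
proof
  fix q assume "q \<in> int_closure B"
  then obtain n cs where cs: "\<forall>i<n. cs i \<in> B" and eq: "q ^ n + (\<Sum>i<n. cs i * q ^ i) = 0"
    by (auto simp: int_closure_def)
  have "\<exists>p\<in>D. q j = to_fract p" for j
  proof -
    have "\<forall>i<n. \<exists>p\<in>D. cs i j = to_fract p"
      using cs assms(2) triples_component by blast
    then obtain d where d: "\<forall>i<n. d i \<in> D \<and> cs i j = to_fract (d i)"
      by metis
    have eqj: "q j ^ n + (\<Sum>i<n. to_fract (d i) * q j ^ i) = 0"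
    proof -
      have "(q ^ n + (\<Sum>i<n. cs i * q ^ i)) j = 0" using eq by simp
      then show ?thesis
        using d by (simp add: ring_hom_power[OF is_ring_hom_apply] ring_hom_sum[OF is_ring_hom_apply])
    qed
    obtain p where p: "q j = to_fract p"
      using integral_fract_in_range_to_fract[OF eqj] by blast
    have "p \<in> D"
    proof (cases "D = UNIV")
      case False
      then have D: "D = s_polys" using assms(1) by (simp add: admissible_def)
      have "to_fract (p ^ n + (\<Sum>i<n. d i * p ^ i)) = 0"
        using eqj p by (simp add: to_fract_power)
      then have "p ^ n + (\<Sum>i<n. d i * p ^ i) = 0" by (simp only: to_fract_eq_0_iff)
      then show ?thesis
        using integral_over_constants_degree_0[of p n d] d D by (auto simp: s_polys_def)
    qed simp
    then show ?thesis using p by blast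
  qed
  then obtain g where "\<forall>j. g j \<in> D \<and> q j = to_fract (g j)" by metis
  then show "q \<in> triples D"
    using triples_mem[of g D] by (metis triple_def ext)
qed

text \<open>Conversely every triple is a root of the monic cubic (X - w1)(X - w2)(X - w3), where w_i \<in> B
  agrees with the triple on the i-th component.\<close>

lemma triples_subset_int_closure:
  assumes "admissible D" "glued D {0} \<subseteq> B" "B \<subseteq> triples D" "is_subring B"
  shows "triples D \<subseteq> int_closure B"
proof
  fix v assume "v \<in> triples D"
  then obtain g where v: "v = triple g" and g: "\<forall>i. g i \<in> D" by (auto simp: triples_def)
  let ?s = "triple (\<lambda>j. s_var ^ 2)"
  have s: "?s \<in> nzd B"
    using s_var_square_glued[OF assms(1)] assms(2) nzd_glued[OF assms(1-3)] s_var_square_neq_0 by auto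
  have "?s * v \<in> glued D {0}"
    unfolding v triple_mult glued_mem
    using g admissible_closed(4)[OF assms(1) admissible_s_var_power[OF assms(1)]] by simp
  then have quot: "v \<in> tot_quot B"
    using s assms(2) by (auto simp: tot_quot_def)
  obtain w1 where w1: "w1 \<in> B" "w1 C1 = to_fract (g C1)"
    using glued_lift_component[OF assms(1)] g assms(2) by blast
  obtain w2 where w2: "w2 \<in> B" "w2 C2 = to_fract (g C2)"
    using glued_lift_component[OF assms(1)] g assms(2) by blast
  obtain w3 where w3: "w3 \<in> B" "w3 C3 = to_fract (g C3)"
    using glued_lift_component[OF assms(1)] g assms(2) by blast
  define cs where "cs = (\<lambda>i::nat. [- (w1 * w2 * w3), w1 * w2 + w1 * w3 + w2 * w3, - (w1 + w2 + w3)] ! i)"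
  have "- (w1 * w2 * w3) \<in> B" "w1 * w2 + w1 * w3 + w2 * w3 \<in> B" "- (w1 + w2 + w3) \<in> B"
    using assms(4) w1(1) w2(1) w3(1) unfolding is_subring_def by blast+
  then have cs_B: "\<forall>i<3. cs i \<in> B"
    by (auto simp: cs_def numeral_3_eq_3 less_Suc_eq numeral_2_eq_2)
  have "v ^ 3 + (\<Sum>i<3. cs i * v ^ i) = (v - w1) * (v - w2) * (v - w3)"
    by (simp add: cs_def numeral_3_eq_3 lessThan_Suc algebra_simps power2_eq_square power3_eq_cube)
  also have "\<dots> = 0"
  proof (rule ext)
    fix i show "((v - w1) * (v - w2) * (v - w3)) i = 0 i"
      using w1 w2 w3 by (cases i) (simp_all add: v)
  qed
  finally show "v \<in> int_closure B"
    using quot cs_B unfolding int_closure_def by blast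
qed

lemma int_closure_glued:
  assumes "admissible D" "glue_ideal D I"
  shows "int_closure (glued D I) = triples D"
proof -
  have "glued D {0} \<subseteq> glued D I"
    using assms(2) by (intro glued_mono) (simp add: glue_ideal_def)
  then show ?thesis
    using int_closure_glued_subset[OF assms(1) glued_subset_triples]
      triples_subset_int_closure[OF assms(1) _ glued_subset_triples is_subring_glued[OF assms]]
    by blast
qed

lemma nzd_glued_eq:
  "admissible D \<Longrightarrow> glue_ideal D I \<Longrightarrow> nzd (glued D I) = {b \<in> glued D I. \<forall>i. b i \<noteq> 0}"
  by (rule nzd_glued) (auto simp: glue_ideal_def intro!: glued_mono glued_subset_triples)


section \<open>Strict closure of glued rings\<close>

text \<open>The s^0-coefficients of the i-th and j-th components give a B-balanced pairing on triples,
  because the s^0-coefficients of an element of B agree on all components.\<close>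

definition s0_of :: "K \<Rightarrow> bit poly" where
  "s0_of q = coeff_s0 (THE p. q = to_fract p)"

definition s0_pairing :: "cmp \<Rightarrow> cmp \<Rightarrow> T \<times> T \<Rightarrow> bit poly" where
  "s0_pairing i j = (\<lambda>(u, v). s0_of (u i) * s0_of (v j))"

lemma s0_of_to_fract [simp]: "s0_of (to_fract p) = coeff_s0 p"
  by (simp add: s0_of_def)

lemma s0_of_1 [simp]: "s0_of 1 = 1"
  using s0_of_to_fract[of 1] by simp

lemma strict_closure_glued_subset:
  assumes "B \<subseteq> glued D UNIV"
  shows "strict_closure B (triples D) \<subseteq> glued D UNIV"
proof
  fix \<alpha> assume "\<alpha> \<in> strict_closure B (triples D)"
  then have "\<alpha> \<in> triples D" and rel: "tens \<alpha> 1 - tens 1 \<alpha> \<in> tensor_rel B (triples D)"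
    by (auto simp: strict_closure_def)
  then obtain g where \<alpha>: "\<alpha> = triple g" and gD: "\<forall>i. g i \<in> D"
    by (auto simp: triples_def)
  have "coeff_s0 (g i) = coeff_s0 (g j)" for i j
  proof -
    have "tensor_lift (s0_pairing i j) (tens \<alpha> 1 - tens 1 \<alpha>) = 0"
    proof (rule tensor_lift_tensor_rel[OF rel])
      fix c c' d assume "c \<in> triples D" "c' \<in> triples D" "d \<in> triples D"
      then obtain gc gc' gd where "c = triple gc" "c' = triple gc'" "d = triple gd"
        by (auto simp: triples_def)
      then show "s0_pairing i j (c + c', d) = s0_pairing i j (c, d) + s0_pairing i j (c', d)"
        by (simp add: s0_pairing_def triple_add coeff_s0_add algebra_simps del: to_fract_add)
    next
      fix c d d' assume "c \<in> triples D" "d \<in> triples D" "d' \<in> triples D"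
      then obtain gc gd gd' where "c = triple gc" "d = triple gd" "d' = triple gd'"
        by (auto simp: triples_def)
      then show "s0_pairing i j (c, d + d') = s0_pairing i j (c, d) + s0_pairing i j (c, d')"
        by (simp add: s0_pairing_def triple_add coeff_s0_add algebra_simps del: to_fract_add)
    next
      fix c d b assume "c \<in> triples D" "d \<in> triples D" "b \<in> B"
      then obtain gc gd gb where "c = triple gc" "d = triple gd" "b = triple gb"
        and "coeff_s0 (gb C2) = coeff_s0 (gb C1)" "coeff_s0 (gb C3) = coeff_s0 (gb C1)"
        using assms by (auto simp: triples_def glued_def)
      moreover have "coeff_s0 (gb i) = coeff_s0 (gb j)"
        using calculation(4,5) by (cases i; cases j) auto
      ultimately show "s0_pairing i j (c * b, d) = s0_pairing i j (c, b * d)"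
        by (simp add: s0_pairing_def triple_mult coeff_s0_mult algebra_simps del: to_fract_mult)
    qed
    then show ?thesis
      by (simp add: tensor_lift_diff tensor_lift_tens s0_pairing_def \<alpha>)
  qed
  then show "\<alpha> \<in> glued D UNIV"
    unfolding \<alpha> glued_mem using gD by auto
qed

definition idem :: "cmp \<Rightarrow> T" where
  "idem i = triple (\<lambda>j. if j = i then 1 else 0)"

lemma triples_closed:
  assumes "admissible D"
  shows "a \<in> triples D \<Longrightarrow> b \<in> triples D \<Longrightarrow> a + b \<in> triples D \<and> a * b \<in> triples D"
    "0 \<in> triples D" "1 \<in> triples D" "idem i \<in> triples D"
proof -
  show "a \<in> triples D \<Longrightarrow> b \<in> triples D \<Longrightarrow> a + b \<in> triples D \<and> a * b \<in> triples D"
    using admissible_closed[OF assms] by (auto simp: triples_def triple_add triple_mult)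
  show "0 \<in> triples D" "1 \<in> triples D" "idem i \<in> triples D"
    unfolding triple_0 triple_1 idem_def triples_mem using admissible_closed[OF assms] by auto
qed

lemma idem_sum: "idem C1 + idem C2 + idem C3 = 1"
  by (rule ext) (case_tac x; simp add: idem_def)

lemma rho_eq_idem_mult_yy: "rho = idem C1 * yy" and idem_mult_yy_eq_0: "idem C2 * yy = 0"
  unfolding yy_triple rho_triple idem_def triple_mult triple_0
  by (auto intro!: arg_cong[where f = triple] split: cmp.split)

lemma rho_eq_idem_mult_xx_plus_yy: "rho = idem C1 * (xx + yy)"
  and idem_mult_xx_plus_yy_eq_0: "idem C3 * (xx + yy) = 0"
  unfolding xx_plus_yy_triple rho_triple idem_def triple_mult triple_0
  by (auto intro!: arg_cong[where f = triple] split: cmp.split)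

lemma mult_rho_in_strict_closure:
  assumes "admissible D" "p \<in> glued D {0}"
  shows "p * rho \<in> strict_closure (glued D {0}) (triples D)"
  using triples_closed[OF assms(1)] glued_subset_triples
    yy_glued[OF assms(1)] glued_add[OF assms(1) glue_ideal_0 xx_glued[OF assms(1)] yy_glued[OF assms(1)]]
    assms(2) idem_sum rho_eq_idem_mult_yy idem_mult_yy_eq_0 rho_eq_idem_mult_xx_plus_yy
    idem_mult_xx_plus_yy_eq_0
  by (intro mult_in_strict_closure_split[where ea = "idem C1" and eb = "idem C2" and ec = "idem C3"
        and y = yy and w = "xx + yy"]) auto

lemma eval_z_mult_rho: "eval_z a * rho = triple (\<lambda>i. case i of C1 \<Rightarrow> s_var * s_const a | C2 \<Rightarrow> 0 | C3 \<Rightarrow> 0)"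
  unfolding eval_z_triple rho_triple triple_mult
  by (auto intro!: arg_cong[where f = triple] split: cmp.split simp: mult.commute)

lemma eval_z_mult_rho_glued: "eval_z a * rho \<in> glued D J \<Longrightarrow> a \<in> J"
  unfolding eval_z_mult_rho glued_mem by simp

lemma eval_z_glued_0: "admissible D \<Longrightarrow> (D = s_polys \<longrightarrow> degree a = 0) \<Longrightarrow> eval_z a \<in> glued D {0}"
  unfolding eval_z_triple glued_mem by (auto simp: admissible_def s_const_in_s_polys)

text \<open>The defect sum of the s^1-parts is moved into the first component.\<close>

lemma glued_decompose:
  assumes "admissible D" "v \<in> glued D UNIV"
  obtains r a where "r \<in> glued D {0}" "D = s_polys \<longrightarrow> degree a = 0" "v = r + eval_z a * rho"
proof -
  obtain g where v: "v = triple g" and gD: "\<forall>i. g i \<in> D"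
      and h: "coeff_s0 (g C2) = coeff_s0 (g C1)" "coeff_s0 (g C3) = coeff_s0 (g C1)"
    using assms(2) by (auto simp: glued_def)
  define a where "a = coeff_s1 (g C1) + coeff_s1 (g C2) + coeff_s1 (g C3)"
  have deg_a: "D = s_polys \<longrightarrow> degree a = 0"
    using gD by (auto simp: a_def coeff_s_s_polys)
  have sa: "s_var * s_const a \<in> D"
    using assms(1) deg_a s_var_in_s_polys s_const_in_s_polys admissible_closed(4)[OF assms(1)]
    by (auto simp: admissible_def)
  define r where "r = triple (\<lambda>i. case i of C1 \<Rightarrow> g C1 + s_var * s_const a | C2 \<Rightarrow> g C2 | C3 \<Rightarrow> g C3)"
  have "r \<in> glued D {0}"
    unfolding r_def glued_mem using gD h sa admissible_closed[OF assms(1)]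
    by (auto simp: cmp_all coeff_s0_add coeff_s1_add a_def algebra_simps bit_poly_add_self bit_poly_two)
  moreover have "v = r + eval_z a * rho"
    unfolding v r_def eval_z_mult_rho triple_add
    by (auto intro!: arg_cong[where f = triple] split: cmp.split simp: add.assoc bit_poly_poly_add_self)
  ultimately show ?thesis using deg_a that by blast
qed

lemma rho_glued_UNIV: "admissible D \<Longrightarrow> rho \<in> glued D UNIV"
  unfolding rho_triple glued_mem using s_var_in_s_polys admissible_closed(1)[of D]
  by (auto simp: admissible_def split: cmp.split)

lemma rho_notin_glued: "1 \<notin> J \<Longrightarrow> rho \<notin> glued D J"
  unfolding rho_triple glued_mem by simp

lemma strict_closure_glued:
  assumes "admissible D"
  shows "strict_closure (glued D {0}) (triples D) = glued D UNIV"
proof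
  show "strict_closure (glued D {0}) (triples D) \<subseteq> glued D UNIV"
    by (rule strict_closure_glued_subset) (simp add: glued_mono)
  show "glued D UNIV \<subseteq> strict_closure (glued D {0}) (triples D)"
  proof
    fix v assume "v \<in> glued D UNIV"
    then obtain r a where r: "r \<in> glued D {0}" "D = s_polys \<longrightarrow> degree a = 0" "v = r + eval_z a * rho"
      using glued_decompose[OF assms] by blast
    have "r \<in> strict_closure (glued D {0}) (triples D)"
      using r glued_subset_triples triples_closed[OF assms] by (intro strict_closure_base) auto
    moreover have "eval_z a * rho \<in> strict_closure (glued D {0}) (triples D)"
      using mult_rho_in_strict_closure[OF assms eval_z_glued_0[OF assms r(2)]] .
    ultimately show "v \<in> strict_closure (glued D {0}) (triples D)"
      unfolding r(3) using triples_closed[OF assms] by (intro strict_closure_add) auto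
  qed
qed


section \<open>Weakly Arf closure of glued rings\<close>

text \<open>A generator bc/a of the weakly Arf step with b = au, c = av is the product auv.  If the
  s^0-part of a vanishes, the s^1-parts of auv are l_i u_i v_i, where l_i, u_i, v_i are the s^1-part
  of a and the s^0-parts of u and v.  The following condition on J makes this harmless.\<close>

definition s_coeff_values :: "st_poly set \<Rightarrow> bit poly set" where
  "s_coeff_values D = (if D = s_polys then {a. degree a = 0} else UNIV)"

definition arf_condition :: "st_poly set \<Rightarrow> bit poly set \<Rightarrow> bool" where
  "arf_condition D J \<longleftrightarrow> (\<forall>l u v :: cmp \<Rightarrow> bit poly.
     (\<forall>i. l i \<in> s_coeff_values D \<and> u i \<in> s_coeff_values D \<and> v i \<in> s_coeff_values D) \<longrightarrow>
     l C1 + l C2 + l C3 \<in> J \<longrightarrow> l C1 * u C1 + l C2 * u C2 + l C3 * u C3 \<in> J \<longrightarrow>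
     l C1 * v C1 + l C2 * v C2 + l C3 * v C3 \<in> J \<longrightarrow>
     l C1 * u C1 * v C1 + l C2 * u C2 * v C2 + l C3 * u C3 * v C3 \<in> J)"

lemma coeff_s_in_s_coeff_values: "p \<in> D \<Longrightarrow> coeff_s0 p \<in> s_coeff_values D"
  "p \<in> D \<Longrightarrow> coeff_s1 p \<in> s_coeff_values D"
  by (auto simp: s_coeff_values_def coeff_s_s_polys)

lemma coeff_s1_sum_triple_product:
  assumes "coeff_s0 (a C2) = coeff_s0 (a C1)" "coeff_s0 (a C3) = coeff_s0 (a C1)"
    "coeff_s0 (u C2) = coeff_s0 (u C1)" "coeff_s0 (u C3) = coeff_s0 (u C1)"
    "coeff_s0 (v C2) = coeff_s0 (v C1)" "coeff_s0 (v C3) = coeff_s0 (v C1)"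
  shows "coeff_s1 (a C1 * u C1 * v C1) + coeff_s1 (a C2 * u C2 * v C2) + coeff_s1 (a C3 * u C3 * v C3)
    = coeff_s0 (v C1) * (coeff_s1 (a C1 * u C1) + coeff_s1 (a C2 * u C2) + coeff_s1 (a C3 * u C3))
      + coeff_s0 (u C1) * (coeff_s1 (a C1 * v C1) + coeff_s1 (a C2 * v C2) + coeff_s1 (a C3 * v C3))
      + coeff_s0 (u C1 * v C1) * (coeff_s1 (a C1) + coeff_s1 (a C2) + coeff_s1 (a C3))"
  using assms by (simp add: coeff_s1_mult coeff_s0_mult algebra_simps bit_poly_two)

lemma glued_arf_product:
  assumes D: "admissible D" and I: "glue_ideal D I" "I \<subseteq> J" and Q: "arf_condition D J"
    and a: "triple a \<in> glued D I" and au: "triple (\<lambda>i. a i * u i) \<in> glued D I"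
    and av: "triple (\<lambda>i. a i * v i) \<in> glued D I" and uv: "\<forall>i. u i \<in> D \<and> v i \<in> D"
  shows "triple (\<lambda>i. a i * u i * v i) \<in> glued D J"
proof -
  have a': "\<forall>i. a i \<in> D" "coeff_s0 (a C2) = coeff_s0 (a C1)" "coeff_s0 (a C3) = coeff_s0 (a C1)"
      "coeff_s1 (a C1) + coeff_s1 (a C2) + coeff_s1 (a C3) \<in> I"
    and au': "coeff_s0 (a C2 * u C2) = coeff_s0 (a C1 * u C1)" "coeff_s0 (a C3 * u C3) = coeff_s0 (a C1 * u C1)"
      "coeff_s1 (a C1 * u C1) + coeff_s1 (a C2 * u C2) + coeff_s1 (a C3 * u C3) \<in> I"
    and av': "coeff_s0 (a C2 * v C2) = coeff_s0 (a C1 * v C1)" "coeff_s0 (a C3 * v C3) = coeff_s0 (a C1 * v C1)"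
      "coeff_s1 (a C1 * v C1) + coeff_s1 (a C2 * v C2) + coeff_s1 (a C3 * v C3) \<in> I"
    using a au av by (simp_all add: glued_mem)
  have in_D: "a i * u i * v i \<in> D" for i
    using a'(1) uv admissible_closed(4)[OF D] by blast
  show ?thesis
  proof (cases "coeff_s0 (a C1) = 0")
    case True
    then have a0: "coeff_s0 (a i) = 0" for i
      using a' by (cases i) auto
    let ?l = "\<lambda>i. coeff_s1 (a i)" and ?u = "\<lambda>i. coeff_s0 (u i)" and ?v = "\<lambda>i. coeff_s0 (v i)"
    have "?l C1 * ?u C1 * ?v C1 + ?l C2 * ?u C2 * ?v C2 + ?l C3 * ?u C3 * ?v C3 \<in> J"
      using Q[unfolded arf_condition_def, rule_format, of ?l ?u ?v] a' au' av' I(2) uv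
        coeff_s_in_s_coeff_values
      by (auto simp: coeff_s1_mult a0)
    then show ?thesis
      unfolding glued_mem using in_D by (simp add: coeff_s1_mult coeff_s0_mult a0)
  next
    case False
    have uv23: "coeff_s0 (u C2) = coeff_s0 (u C1)" "coeff_s0 (u C3) = coeff_s0 (u C1)"
        "coeff_s0 (v C2) = coeff_s0 (v C1)" "coeff_s0 (v C3) = coeff_s0 (v C1)"
      using au'(1,2) av'(1,2) a'(2,3) False by (simp_all add: coeff_s0_mult)
    note coeff_s1_sum_triple_product[OF a'(2,3) uv23]
    moreover have "u C1 * v C1 \<in> D"
      using uv admissible_closed(4)[OF D] by blast
    then have "coeff_s0 (v C1) * (coeff_s1 (a C1 * u C1) + coeff_s1 (a C2 * u C2) + coeff_s1 (a C3 * u C3))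
          + coeff_s0 (u C1) * (coeff_s1 (a C1 * v C1) + coeff_s1 (a C2 * v C2) + coeff_s1 (a C3 * v C3))
          + coeff_s0 (u C1 * v C1) * (coeff_s1 (a C1) + coeff_s1 (a C2) + coeff_s1 (a C3)) \<in> I"
      using I(1) au'(3) av'(3) a'(4) uv unfolding glue_ideal_def by simp
    ultimately have "coeff_s1 (a C1 * u C1 * v C1) + coeff_s1 (a C2 * u C2 * v C2)
        + coeff_s1 (a C3 * u C3 * v C3) \<in> J"
      using I(2) by auto
    moreover have "coeff_s0 (a i * u i * v i) = coeff_s0 (a C1 * u C1 * v C1)" for i
      using a'(2,3) uv23 by (cases i) (simp_all add: coeff_s0_mult)
    ultimately show ?thesis
      unfolding glued_mem using in_D by simp
  qed
qed

lemma wa_generator_glued: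
  assumes D: "admissible D" and I: "glue_ideal D I" "I \<subseteq> J" and Q: "arf_condition D J"
    and a: "a \<in> nzd (glued D I)" and bc: "b \<in> glued D I" "c \<in> glued D I"
    and u: "u \<in> int_closure (glued D I)" "a * u = b"
    and v: "v \<in> int_closure (glued D I)" "a * v = c" and q: "a * q = b * c"
  shows "q \<in> glued D J"
proof -
  have "a \<in> glued D I" and a_nz: "\<forall>i. a i \<noteq> 0"
    using a nzd_glued_eq[OF D I(1)] by auto
  then obtain ga where a_eq: "a = triple ga" and a_glued: "triple ga \<in> glued D I"
    by (auto simp: glued_def)
  obtain gu where u_eq: "u = triple gu" and gu: "\<forall>i. gu i \<in> D"
    using u(1) int_closure_glued[OF D I(1)] by (auto simp: triples_def)
  obtain gv where v_eq: "v = triple gv" and gv: "\<forall>i. gv i \<in> D"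
    using v(1) int_closure_glued[OF D I(1)] by (auto simp: triples_def)
  have "q = triple (\<lambda>i. ga i * gu i * gv i)"
  proof (rule ext)
    fix i
    have "a i * q i = a i * (a i * u i * v i)"
      using fun_cong[OF q, of i] u(2) v(2) by (auto simp: ac_simps)
    then show "q i = triple (\<lambda>i. ga i * gu i * gv i) i"
      using a_nz by (simp add: a_eq u_eq v_eq)
  qed
  moreover have "triple (\<lambda>i. ga i * gu i) \<in> glued D I" "triple (\<lambda>i. ga i * gv i) \<in> glued D I"
    using bc u(2) v(2) by (simp_all add: a_eq u_eq v_eq triple_mult)
  ultimately show ?thesis
    using glued_arf_product[OF D I Q a_glued] gu gv by simp
qed

lemma subset_wa_step: "B \<subseteq> wa_step B"
  unfolding wa_step_def by (auto intro: ring_gen.gen)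

lemma wa_step_glued_subset:
  assumes "admissible D" "glue_ideal D I" "glue_ideal D J" "I \<subseteq> J" "arf_condition D J"
  shows "wa_step (glued D I) \<subseteq> glued D J"
  unfolding wa_step_def
  using glued_mono[OF assms(4)] wa_generator_glued[OF assms(1,2,4,5)]
  by (intro ring_gen_subset_glued[OF assms(1,3)]) blast

lemma bit_arf_identity:
  fixes l1 l2 l3 u1 u2 u3 v1 v2 v3 :: bit
  assumes "l1 + l2 + l3 = 0" "l1 * u1 + l2 * u2 + l3 * u3 = 0" "l1 * v1 + l2 * v2 + l3 * v3 = 0"
  shows "l1 * u1 * v1 + l2 * u2 * v2 + l3 * u3 * v3 = 0"
  using assms by (cases l1; cases l2; cases l3; cases u1; cases u2; cases u3; simp)

lemma poly_arf_identity:
  fixes x :: bit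
  assumes "poly (l C1 + l C2 + l C3) x = 0" "poly (l C1 * u C1 + l C2 * u C2 + l C3 * u C3) x = 0"
    "poly (l C1 * v C1 + l C2 * v C2 + l C3 * v C3) x = 0"
  shows "poly (l C1 * u C1 * v C1 + l C2 * u C2 * v C2 + l C3 * u C3 * v C3) x = 0"
  using assms unfolding poly_add poly_mult by (rule bit_arf_identity)

lemma degree_0_add_mult:
  "degree p = 0 \<Longrightarrow> degree q = 0 \<Longrightarrow> degree (p + q) = 0 \<and> degree (p * q) = 0"
  using degree_add_le[of p 0 q] degree_mult_le[of p q] by simp

lemma degree_0_eq_0_iff:
  assumes "degree p = 0"
  shows "p = 0 \<longleftrightarrow> poly p 0 = 0"
proof -
  obtain c where "p = [:c:]"
    using degree_0_id[OF assms, symmetric] by blast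
  then show ?thesis by simp
qed

lemma arf_condition_s_polys: "arf_condition s_polys {0}"
  unfolding arf_condition_def s_coeff_values_def if_P[OF refl]
proof (intro allI impI)
  fix l u v :: "cmp \<Rightarrow> bit poly"
  assume const: "\<forall>i. l i \<in> {a. degree a = 0} \<and> u i \<in> {a. degree a = 0} \<and> v i \<in> {a. degree a = 0}"
    and sums: "l C1 + l C2 + l C3 \<in> {0}" "l C1 * u C1 + l C2 * u C2 + l C3 * u C3 \<in> {0}"
      "l C1 * v C1 + l C2 * v C2 + l C3 * v C3 \<in> {0}"
  have "degree (l C1 * u C1 * v C1 + l C2 * u C2 * v C2 + l C3 * u C3 * v C3) = 0"
    using const by (simp add: degree_0_add_mult)
  moreover have "poly (l C1 * u C1 * v C1 + l C2 * u C2 * v C2 + l C3 * u C3 * v C3) 0 = 0"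
    using sums by (intro poly_arf_identity) simp_all
  ultimately show "l C1 * u C1 * v C1 + l C2 * u C2 * v C2 + l C3 * u C3 * v C3 \<in> {0}"
    using degree_0_eq_0_iff by blast
qed

definition I01 :: "bit poly set" where
  "I01 = {f. poly f 0 = 0 \<and> poly f 1 = 0}"

lemma glue_ideal_I01: "glue_ideal D I01"
  by (simp add: glue_ideal_def I01_def)

text \<open>Over k = Z/(2) the identity behind the Arf condition holds pointwise at t = 0 and t = 1,
  but not for polynomials; this is why R is not weakly Arf while A is.\<close>

lemma arf_condition_I01: "arf_condition D I01"
  unfolding arf_condition_def I01_def mem_Collect_eq
  using poly_arf_identity by blast

lemma wa_step_AA: "wa_step AA = AA"
  using wa_step_glued_subset[OF admissible_s_polys glue_ideal_0 glue_ideal_0 _ arf_condition_s_polys]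
    subset_wa_step[of AA]
  unfolding AA_eq_glued by blast

lemma wa_step_glued_I01: "wa_step (glued UNIV I01) = glued UNIV I01"
  using wa_step_glued_subset[OF admissible_UNIV glue_ideal_I01 glue_ideal_I01 _ arf_condition_I01]
    subset_wa_step[of "glued UNIV I01"]
  by blast

lemma RR_subset_glued_I01: "RR \<subseteq> glued UNIV I01"
  unfolding RR_eq_glued by (rule glued_mono) (simp add: I01_def)

lemma wa_step_RR_subset: "wa_step RR \<subseteq> glued UNIV I01"
  unfolding RR_eq_glued
  using wa_step_glued_subset[OF admissible_UNIV glue_ideal_0 glue_ideal_I01 _ arf_condition_I01]
  by (simp add: I01_def)

lemma I01_dvd: "f \<in> I01 \<Longrightarrow> \<exists>p. f = [:0, 1:] * (1 + [:0, 1:]) * p"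
proof -
  assume "f \<in> I01"
  then have "poly f 0 = 0" "poly f 1 = 0" by (auto simp: I01_def)
  from this(1) have "[:- 0, 1:] dvd f" by (simp only: poly_eq_0_iff_dvd)
  then obtain g where g: "f = [:0, 1:] * g" by (auto elim: dvdE)
  have "poly g 1 = 0" using \<open>poly f 1 = 0\<close> g by simp
  then have "[:- 1, 1:] dvd g" by (simp only: poly_eq_0_iff_dvd)
  then obtain h where h: "g = [:- 1, 1:] * h" by (auto elim: dvdE)
  have "[:- 1, 1:] = (1 + [:0, 1:] :: bit poly)" by (simp add: one_pCons)
  then show ?thesis using g h by (metis mult.assoc)
qed

lemma t_times_one_plus_t_in_I01: "[:0, 1:] * (1 + [:0, 1:]) * p \<in> I01"
  by (simp add: I01_def)

lemma mult_self_in_wa_step: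
  assumes "a \<in> nzd B" "u \<in> int_closure B" "a * u \<in> B" "(a * u) * (a * u) \<in> B"
  shows "a * u * u \<in> wa_step B"
proof -
  have aq: "a * (a * u * u) = (a * u) * (a * u)"
    by (simp add: ac_simps)
  then have "a * u * u \<in> tot_quot B"
    using assms(1) assms(4)[folded aq] unfolding tot_quot_def by blast
  then show ?thesis
    unfolding wa_step_def using assms aq by (blast intro: ring_gen.gen)
qed

lemma s_var_linear_neq_0: "s_var * s_const c + s_var ^ 2 * s_const 1 \<noteq> 0"
proof
  assume "s_var * s_const c + s_var ^ 2 * s_const 1 = 0"
  then have "s_var * (s_const c + s_var) = 0"
    by (simp add: algebra_simps power2_eq_square)
  then have "coeff_s1 (s_const c + s_var) = 0"
    by (simp add: s_var_def)
  then show False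
    by (simp add: coeff_s1_add)
qed

text \<open>For f = t(1 + t)p the element (f, 0, 0) is reached in one weakly Arf step: with
  a = s(pt, p(1 + t), p) + s^2 and u = (1 + t, t, 0), both a and au lie in R, and
  q = (au)^2 / a agrees with (f, 0, 0) modulo R.\<close>

lemma eval_z_mult_rho_in_wa_step_RR:
  assumes "f \<in> I01"
  shows "eval_z f * rho \<in> wa_step RR"
proof -
  define t :: "bit poly" where "t = [:0, 1:]"
  obtain p where f: "f = t * (1 + t) * p" using I01_dvd[OF assms] by (auto simp: t_def)
  define l where "l = (\<lambda>i. case i of C1 \<Rightarrow> p * t | C2 \<Rightarrow> p * (1 + t) | C3 \<Rightarrow> p)"
  define m where "m = (\<lambda>i. case i of C1 \<Rightarrow> 1 + t | C2 \<Rightarrow> t | C3 \<Rightarrow> (0::bit poly))"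
  define a where "a = triple (\<lambda>i. s_var * s_const (l i) + s_var ^ 2 * s_const 1)"
  define u where "u = triple (\<lambda>i. s_const (m i))"
  define q where "q = a * u * u"
  have au: "a * u = triple (\<lambda>i. s_var * s_const (l i * m i) + s_var ^ 2 * s_const (m i))"
    unfolding a_def u_def triple_mult by (rule arg_cong[where f = triple]) (simp add: s_const_mult algebra_simps)
  have q_eq: "q = triple (\<lambda>i. s_var * s_const (l i * (m i * m i)) + s_var ^ 2 * s_const (m i * m i))"
    unfolding q_def au unfolding u_def triple_mult
    by (rule arg_cong[where f = triple]) (simp add: s_const_mult algebra_simps)
  have "l C1 + l C2 + l C3 = (p * t + p * t) + (p + p)"
    and "l C1 * m C1 + l C2 * m C2 + l C3 * m C3 = p * t * (1 + t) + p * t * (1 + t)"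
    and "l C1 * (m C1 * m C1) + l C2 * (m C2 * m C2) + l C3 * (m C3 * m C3) + f
      = (p * t * (1 + t) + p * t * (1 + t)) + (p * t * (1 + t) * t + p * t * (1 + t) * t)"
    by (simp_all add: l_def m_def f algebra_simps)
  then have l_sum: "l C1 + l C2 + l C3 = 0" and lm_sum: "l C1 * m C1 + l C2 * m C2 + l C3 * m C3 = 0"
    and "l C1 * (m C1 * m C1) + l C2 * (m C2 * m C2) + l C3 * (m C3 * m C3) + f = 0"
    by (simp_all only: bit_poly_add_self add_0)
  then have lmm_sum: "l C1 * (m C1 * m C1) + l C2 * (m C2 * m C2) + l C3 * (m C3 * m C3) = f"
    by (metis add_eq_0_iff bit_poly_uminus)
  have a_RR: "a \<in> RR"
    unfolding RR_eq_glued a_def glued_mem by (simp add: l_sum coeff_s1_add coeff_s0_add del: s_const_1)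
  have "a i \<noteq> 0" for i
    using s_var_linear_neq_0 by (simp add: a_def del: to_fract_add to_fract_mult)
  then have a_nzd: "a \<in> nzd RR"
    using a_RR nzd_glued_eq[OF admissible_UNIV glue_ideal_0] by (simp add: RR_eq_glued)
  have au_RR: "a * u \<in> RR"
    unfolding RR_eq_glued au glued_mem by (simp add: lm_sum coeff_s1_add coeff_s0_add)
  have u_closure: "u \<in> int_closure RR"
    unfolding RR_eq_glued int_closure_glued[OF admissible_UNIV glue_ideal_0] u_def triples_mem by simp
  have q_step: "q \<in> wa_step RR"
    unfolding q_def using a_nzd u_closure au_RR RR_closed(2)[OF au_RR au_RR] by (rule mult_self_in_wa_step)
  have "q + eval_z f * rho \<in> RR"
    unfolding RR_eq_glued q_eq eval_z_mult_rho triple_add glued_mem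
    by (simp add: coeff_s1_add coeff_s0_add lmm_sum[symmetric] add_ac bit_poly_two bit_poly_add_self del: s_const_1)
  then have "q + eval_z f * rho \<in> wa_step RR"
    using subset_wa_step by blast
  then have "(q + eval_z f * rho) + q \<in> wa_step RR"
    using q_step unfolding wa_step_def by (rule ring_gen.add)
  moreover have "(q + eval_z f * rho) + q = eval_z f * rho"
    by (simp add: ac_simps T_add_self add.assoc[symmetric])
  ultimately show ?thesis by simp
qed

lemma wa_step_RR: "wa_step RR = glued UNIV I01"
proof
  show "wa_step RR \<subseteq> glued UNIV I01"
    by (rule wa_step_RR_subset)
  show "glued UNIV I01 \<subseteq> wa_step RR"
  proof
    fix v assume v: "v \<in> glued UNIV I01"
    then obtain r a where r: "r \<in> glued UNIV {0}" "v = r + eval_z a * rho"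
      using glued_decompose[OF admissible_UNIV, of v] glued_mono[of I01 UNIV UNIV] by blast
    have r_RR: "r \<in> RR"
      using r RR_eq_glued by simp
    have "eval_z a * rho = v + r"
      using r(2) by (simp add: ac_simps T_add_self add.assoc[symmetric])
    also have "\<dots> \<in> glued UNIV I01"
      using glued_add[OF admissible_UNIV glue_ideal_I01 v] r_RR RR_subset_glued_I01 by blast
    finally have "a \<in> I01"
      by (rule eval_z_mult_rho_glued)
    then have "eval_z a * rho \<in> wa_step RR"
      by (rule eval_z_mult_rho_in_wa_step_RR)
    moreover have "r \<in> wa_step RR"
      using r_RR subset_wa_step by blast
    ultimately show "v \<in> wa_step RR"
      unfolding r(2) wa_step_def by (rule ring_gen.add[rotated])
  qed
qed

lemma wa_closure_RR: "wa_closure RR = glued UNIV I01"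
proof -
  have "(wa_step ^^ Suc n) RR = glued UNIV I01" for n
    by (induct n) (simp_all add: wa_step_RR wa_step_glued_I01)
  then have "(wa_step ^^ n) RR \<subseteq> glued UNIV I01" for n
    by (cases n) (simp_all add: RR_subset_glued_I01 del: funpow.simps)
  moreover have "(wa_step ^^ 1) RR = glued UNIV I01"
    using \<open>\<And>n. (wa_step ^^ Suc n) RR = glued UNIV I01\<close>[of 0] by simp
  ultimately show ?thesis
    unfolding wa_closure_def by blast
qed

lemma wa_closure_AA: "wa_closure AA = AA"
proof -
  have "(wa_step ^^ n) AA = AA" for n
    by (induct n) (simp_all add: wa_step_AA)
  then show ?thesis
    unfolding wa_closure_def by simp
qed


section \<open>The components of R and A\<close>

definition line_form :: "cmp \<Rightarrow> T" where
  "line_form i = triple (\<lambda>j. if j = i then 0 else s_var)"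

lemma line_form_eqs: "line_form C1 = xx" "line_form C2 = yy" "line_form C3 = xx + yy"
proof -
  show "line_form C1 = xx" "line_form C2 = yy"
    unfolding line_form_def xx_triple yy_triple by (auto intro!: arg_cong[where f = triple] split: cmp.split)
  show "line_form C3 = xx + yy"
    unfolding line_form_def xx_plus_yy_triple by (auto intro!: arg_cong[where f = triple] split: cmp.split)
qed

lemma line_form_glued: "admissible D \<Longrightarrow> line_form i \<in> glued D {0}"
  using xx_glued yy_glued glued_add[OF _ glue_ideal_0] line_form_eqs by (cases i) auto

text \<open>An element of R vanishing on the i-th line is divisible by its equation: each component
  then has zero s^0-part and is divided by s, and the glueing conditions survive the division.\<close>

lemma vanishing_component_subset:
  assumes D: "admissible D" and v: "v \<in> glued D {0}" and vi: "v i = 0"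
  shows "\<exists>r\<in>glued D {0}. v = line_form i * r"
proof -
  obtain g where v_eq: "v = triple g" and gD: "\<forall>j. g j \<in> D"
      and h: "coeff_s0 (g C2) = coeff_s0 (g C1)" "coeff_s0 (g C3) = coeff_s0 (g C1)"
        "coeff_s1 (g C1) + coeff_s1 (g C2) + coeff_s1 (g C3) = 0"
    using v by (auto simp: glued_def)
  have gi: "g i = 0" using vi v_eq by simp
  have s0_zero: "coeff_s0 (g j) = 0" for j
    using h gi by (cases i; cases j) auto
  define j0 where "j0 = (if i = C1 then C2 else C1)"
  define a where "a = coeff_s1 (g j0)"
  have s1_eq: "coeff_s1 (g j) = a" if "j \<noteq> i" for j
    using h(3) gi that unfolding a_def j0_def
    by (cases i; cases j) (auto simp: add_eq_0_iff bit_poly_uminus)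
  have deg_a: "D = s_polys \<longrightarrow> degree a = 0"
    using gD unfolding a_def by (auto simp: coeff_s_s_polys)
  define H where "H = s_const a + s_var * s_const (coeff_s1 (div_s (g C1)) + coeff_s1 (div_s (g C2))
      + coeff_s1 (div_s (g C3)))"
  define k where "k = (\<lambda>j. if j = i then H else div_s (g j))"
  have "H \<in> D"
  proof (cases "D = UNIV")
    case False
    then have D_eq: "D = s_polys" using D by (simp add: admissible_def)
    have "degree (coeff_s1 (div_s (g C1)) + coeff_s1 (div_s (g C2)) + coeff_s1 (div_s (g C3))) = 0"
      using gD div_s_in_s_polys D_eq by (simp add: coeff_s_s_polys)
    then show ?thesis
      unfolding H_def D_eq using deg_a D_eq s_const_in_s_polys s_var_in_s_polys
        admissible_closed[OF admissible_s_polys] by simp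
  qed simp
  then have "k j \<in> D" for j
    using gD D by (auto simp: k_def admissible_def div_s_in_s_polys)
  moreover have "coeff_s0 (k j) = a" for j
    using s1_eq by (auto simp: k_def H_def coeff_s0_add coeff_s0_div_s)
  moreover have "coeff_s1 (k C1) + coeff_s1 (k C2) + coeff_s1 (k C3) = 0"
    using coeff_s1_div_s_eq_0[OF gi]
    by (cases i) (simp_all add: k_def H_def coeff_s1_add bit_poly_add_self add_ac bit_poly_two)
  ultimately have "triple k \<in> glued D {0}"
    unfolding glued_mem by simp
  moreover have "v = line_form i * triple k"
    unfolding v_eq line_form_def triple_mult
    by (rule arg_cong[where f = triple]) (auto simp: k_def gi s_var_mult_div_s[OF s0_zero, symmetric])
  ultimately show ?thesis by blast
qed

lemma vanishing_component_eq:
  assumes "admissible D"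
  shows "{r \<in> glued D {0}. r i = 0} = {line_form i * r | r. r \<in> glued D {0}}"
proof
  show "{r \<in> glued D {0}. r i = 0} \<subseteq> {line_form i * r | r. r \<in> glued D {0}}"
    using vanishing_component_subset[OF assms] by blast
  show "{line_form i * r | r. r \<in> glued D {0}} \<subseteq> {r \<in> glued D {0}. r i = 0}"
  proof
    fix x assume "x \<in> {line_form i * r | r. r \<in> glued D {0}}"
    then obtain r where "x = line_form i * r" "r \<in> glued D {0}" by blast
    then show "x \<in> {r \<in> glued D {0}. r i = 0}"
      using glued_mult[OF assms glue_ideal_0 line_form_glued[OF assms]] by (simp add: line_form_def)
  qed
qed

lemma triples_eq_components:
  assumes "admissible D"
  shows "triples D = {v. \<forall>i. \<exists>r\<in>glued D {0}. v i = r i}"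
proof
  show "triples D \<subseteq> {v. \<forall>i. \<exists>r\<in>glued D {0}. v i = r i}"
  proof
    fix v assume "v \<in> triples D"
    then obtain g where "v = triple g" "\<forall>i. g i \<in> D" by (auto simp: triples_def)
    have "\<exists>r\<in>glued D {0}. v i = r i" for i
    proof -
      obtain w where "w \<in> glued D {0}" "w i = to_fract (g i)"
        using glued_lift_component[OF assms] \<open>\<forall>i. g i \<in> D\<close> by blast
      then show ?thesis using \<open>v = triple g\<close> by (intro bexI[of _ w]) simp_all
    qed
    then show "v \<in> {v. \<forall>i. \<exists>r\<in>glued D {0}. v i = r i}" by simp
  qed
  show "{v. \<forall>i. \<exists>r\<in>glued D {0}. v i = r i} \<subseteq> triples D"
  proof
    fix v assume "v \<in> {v. \<forall>i. \<exists>r\<in>glued D {0}. v i = r i}"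
    have "\<exists>p\<in>D. v i = to_fract p" for i
    proof -
      obtain r where "r \<in> glued D {0}" "v i = r i"
        using \<open>v \<in> {v. \<forall>i. \<exists>r\<in>glued D {0}. v i = r i}\<close> by blast
      then show ?thesis
        using glued_subset_triples triples_component by (metis subsetD)
    qed
    then obtain g where "\<forall>i. g i \<in> D \<and> v i = to_fract (g i)" by metis
    then have "v = triple g" "\<forall>i. g i \<in> D" by (auto simp: fun_eq_iff)
    then show "v \<in> triples D" by (simp add: triples_mem)
  qed
qed


section \<open>The strict closures and the weakly Arf closure of R and A\<close>

definition s_multiples :: "T set" where
  "s_multiples = {triple g | g. (\<forall>i. g i \<in> s_polys) \<and> (\<forall>i. coeff_s0 (g i) = 0)}"

lemma s_multiples_mem: "triple g \<in> s_multiples \<longleftrightarrow> (\<forall>i. g i \<in> s_polys) \<and> (\<forall>i. coeff_s0 (g i) = 0)"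
  by (auto simp: s_multiples_def triple_inj)

lemma s_multiples_add: "u \<in> s_multiples \<Longrightarrow> v \<in> s_multiples \<Longrightarrow> u + v \<in> s_multiples"
  and s_multiples_mult: "u \<in> s_multiples \<Longrightarrow> c \<in> triples s_polys \<Longrightarrow> u * c \<in> s_multiples"
  using admissible_closed[OF admissible_s_polys]
  by (auto simp: s_multiples_def triples_def triple_add triple_mult triple_inj coeff_s0_add coeff_s0_mult)

lemma xx_s_multiples: "xx \<in> s_multiples" and yy_s_multiples: "yy \<in> s_multiples"
  unfolding xx_triple yy_triple s_multiples_mem
  by (auto simp: s_var_in_s_polys s_polys_const[of 0, simplified] split: cmp.split)

lemma ext_ideal_max_ideal_eq:
  "ext_ideal {a * xx + b * yy | a b. a \<in> AA \<and> b \<in> AA} (triples s_polys) = s_multiples"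
  (is "ext_ideal ?m _ = _")
proof
  show "ext_ideal ?m (triples s_polys) \<subseteq> s_multiples"
  proof
    fix x assume "x \<in> ext_ideal ?m (triples s_polys)"
    then show "x \<in> s_multiples"
    proof induct
      case zero
      show ?case unfolding triple_0 s_multiples_mem by (simp add: s_polys_const[of 0, simplified])
    next
      case (prod i c)
      then obtain a b where "i = a * xx + b * yy" "a \<in> AA" "b \<in> AA" by blast
      moreover have "xx * a \<in> s_multiples" "yy * b \<in> s_multiples"
        using s_multiples_mult xx_s_multiples yy_s_multiples calculation(2,3)
          AA_eq_glued glued_subset_triples by blast+
      ultimately have "i \<in> s_multiples" using s_multiples_add by (simp add: mult.commute)
      then show ?case using s_multiples_mult prod by blast
    qed (use s_multiples_add in blast)
  qed
  show "s_multiples \<subseteq> ext_ideal ?m (triples s_polys)"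
  proof
    fix v assume "v \<in> s_multiples"
    then obtain g where v: "v = triple g" and gD: "\<forall>i. g i \<in> s_polys" and g0: "\<forall>i. coeff_s0 (g i) = 0"
      by (auto simp: s_multiples_def)
    have "xx = 1 * xx + 0 * yy" "yy = 0 * xx + 1 * yy" by simp_all
    then have gens: "xx \<in> ?m" "yy \<in> ?m" using AA_closed(3,4) by blast+
    define h1 where "h1 = triple (\<lambda>i. case i of C1 \<Rightarrow> div_s (g C1) | C2 \<Rightarrow> 0 | C3 \<Rightarrow> div_s (g C3))"
    define h2 where "h2 = triple (\<lambda>i. case i of C1 \<Rightarrow> 0 | C2 \<Rightarrow> div_s (g C2) | C3 \<Rightarrow> 0)"
    have "h1 \<in> triples s_polys" "h2 \<in> triples s_polys"
      unfolding h1_def h2_def triples_mem using gD div_s_in_s_polys s_polys_const[of 0]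
      by (auto split: cmp.split)
    moreover have "v = yy * h1 + xx * h2"
      unfolding v yy_triple xx_triple h1_def h2_def triple_mult triple_add
      by (rule arg_cong[where f = triple]) (auto split: cmp.split simp: s_var_mult_div_s[OF g0[rule_format], symmetric])
    ultimately show "v \<in> ext_ideal ?m (triples s_polys)"
      using ext_ideal.add[OF ext_ideal.prod[OF gens(2)] ext_ideal.prod[OF gens(1)]] by simp
  qed
qed

lemma glued_s_polys_UNIV_eq_max_ideal: "glued s_polys UNIV = {a + u | a u. a \<in> AA \<and> u \<in> s_multiples}"
proof
  show "glued s_polys UNIV \<subseteq> {a + u | a u. a \<in> AA \<and> u \<in> s_multiples}"
  proof
    fix v assume "v \<in> glued s_polys UNIV"
    then obtain g where v: "v = triple g" and gD: "\<forall>i. g i \<in> s_polys"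
        and h: "coeff_s0 (g C2) = coeff_s0 (g C1)" "coeff_s0 (g C3) = coeff_s0 (g C1)"
      by (auto simp: glued_def)
    define a where "a = eval_z (coeff_s0 (g C1))"
    have deg: "degree (coeff_s0 (g C1)) = 0"
      using gD by (simp add: coeff_s_s_polys)
    have "a \<in> AA"
      unfolding a_def AA_eq_glued using deg by (intro eval_z_glued_0 admissible_s_polys) simp
    moreover have "v + a \<in> s_multiples"
      unfolding v a_def eval_z_triple triple_add s_multiples_mem
      using gD h s_const_in_s_polys[OF deg] admissible_closed[OF admissible_s_polys]
      by (auto simp: coeff_s0_add bit_poly_add_self cmp_all)
    moreover have "v = a + (v + a)"
      by (simp add: ac_simps T_add_self T_two)
    ultimately show "v \<in> {a + u | a u. a \<in> AA \<and> u \<in> s_multiples}" by blast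
  qed
  show "{a + u | a u. a \<in> AA \<and> u \<in> s_multiples} \<subseteq> glued s_polys UNIV"
  proof
    fix x assume "x \<in> {a + u | a u. a \<in> AA \<and> u \<in> s_multiples}"
    then obtain a u where x: "x = a + u" and a: "a \<in> AA" and u: "u \<in> s_multiples" by blast
    obtain g where a_eq: "a = triple g" "\<forall>i. g i \<in> s_polys"
        "coeff_s0 (g C2) = coeff_s0 (g C1)" "coeff_s0 (g C3) = coeff_s0 (g C1)"
      using a unfolding AA_eq_glued by (auto simp: glued_def)
    obtain h where u_eq: "u = triple h" "\<forall>i. h i \<in> s_polys" "\<forall>i. coeff_s0 (h i) = 0"
      using u by (auto simp: s_multiples_def)
    show "x \<in> glued s_polys UNIV"
      unfolding x a_eq(1) u_eq(1) triple_add glued_mem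
      using a_eq u_eq admissible_closed[OF admissible_s_polys] by (auto simp: coeff_s0_add)
  qed
qed

lemma glued_closed:
  assumes "admissible D"
  shows "a \<in> glued D UNIV \<Longrightarrow> b \<in> glued D UNIV \<Longrightarrow> a + b \<in> glued D UNIV \<and> a * b \<in> glued D UNIV"
  using glued_add[OF assms glue_ideal_UNIV] glued_mult[OF assms glue_ideal_UNIV] by blast

lemma eval_z_mult_rho_glued_UNIV:
  "admissible D \<Longrightarrow> (D = s_polys \<longrightarrow> degree a = 0) \<Longrightarrow> eval_z a * rho \<in> glued D UNIV"
  using glued_closed eval_z_glued_0 rho_glued_UNIV glued_mono[of "{0}" UNIV] by blast

lemma glued_s_polys_UNIV_eq: "glued s_polys UNIV = {a + c * rho | a c. a \<in> AA \<and> c \<in> kk}"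
proof
  show "glued s_polys UNIV \<subseteq> {a + c * rho | a c. a \<in> AA \<and> c \<in> kk}"
  proof
    fix v assume "v \<in> glued s_polys UNIV"
    then obtain r a where r: "r \<in> glued s_polys {0}" "degree a = 0" "v = r + eval_z a * rho"
      using glued_decompose[OF admissible_s_polys] by blast
    have "eval_z a = kemb (coeff a 0)"
      using degree_0_id[OF r(2)] eval_z_const by metis
    then show "v \<in> {a + c * rho | a c. a \<in> AA \<and> c \<in> kk}"
      using r AA_eq_glued by (auto simp: kk_def)
  qed
  show "{a + c * rho | a c. a \<in> AA \<and> c \<in> kk} \<subseteq> glued s_polys UNIV"
  proof
    fix x assume "x \<in> {a + c * rho | a c. a \<in> AA \<and> c \<in> kk}"
    then obtain a b where x: "x = a + eval_z [:b:] * rho" and a: "a \<in> AA"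
      by (auto simp: kk_def eval_z_const)
    have "eval_z [:b:] * rho \<in> glued s_polys UNIV"
      by (rule eval_z_mult_rho_glued_UNIV[OF admissible_s_polys]) simp
    moreover have "a \<in> glued s_polys UNIV"
      using a AA_eq_glued glued_mono[of "{0}" UNIV] by blast
    ultimately show "x \<in> glued s_polys UNIV"
      unfolding x using glued_closed[OF admissible_s_polys] by blast
  qed
qed

lemma glued_UNIV_UNIV_eq: "glued UNIV UNIV = {r + p * rho | r p. r \<in> RR \<and> p \<in> range eval_z}"
proof
  show "glued UNIV UNIV \<subseteq> {r + p * rho | r p. r \<in> RR \<and> p \<in> range eval_z}"
  proof
    fix v assume "v \<in> glued UNIV UNIV"
    then obtain r a where "r \<in> glued UNIV {0}" "v = r + eval_z a * rho"
      using glued_decompose[OF admissible_UNIV] by blast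
    then show "v \<in> {r + p * rho | r p. r \<in> RR \<and> p \<in> range eval_z}"
      using RR_eq_glued by blast
  qed
  show "{r + p * rho | r p. r \<in> RR \<and> p \<in> range eval_z} \<subseteq> glued UNIV UNIV"
  proof
    fix x assume "x \<in> {r + p * rho | r p. r \<in> RR \<and> p \<in> range eval_z}"
    then obtain r a where x: "x = r + eval_z a * rho" and r: "r \<in> RR" by blast
    have "eval_z a * rho \<in> glued UNIV UNIV"
      using eval_z_mult_rho_glued_UNIV[OF admissible_UNIV] UNIV_neq_s_polys by blast
    moreover have "r \<in> glued UNIV UNIV"
      using r RR_eq_glued glued_mono[of "{0}" UNIV] by blast
    ultimately show "x \<in> glued UNIV UNIV"
      unfolding x using glued_closed[OF admissible_UNIV] by blast
  qed
qed

lemma ring_gen_eq_range_eval_z: "ring_gen (kk \<union> {zz}) = range eval_z"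
proof
  show "ring_gen (kk \<union> {zz}) \<subseteq> range eval_z"
    by (rule ring_gen_subset_range[OF is_ring_hom_eval_z])
      (auto simp: kk_def zz_eq_eval_z eval_z_const[symmetric])
  show "range eval_z \<subseteq> ring_gen (kk \<union> {zz})"
    by (auto intro: eval_z_in_ring_gen ring_gen.gen)
qed

lemma glued_UNIV_UNIV_eq_ring_gen: "glued UNIV UNIV = ring_gen (glued s_polys UNIV \<union> {zz})"
proof
  show "ring_gen (glued s_polys UNIV \<union> {zz}) \<subseteq> glued UNIV UNIV"
    using zz_glued glued_mono[of "{0}" UNIV UNIV]
    by (intro ring_gen_subset_glued[OF admissible_UNIV glue_ideal_UNIV]) (auto simp: glued_def)
  show "glued UNIV UNIV \<subseteq> ring_gen (glued s_polys UNIV \<union> {zz})"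
  proof
    fix v assume "v \<in> glued UNIV UNIV"
    then obtain r a where r: "r \<in> RR" "v = r + eval_z a * rho"
      using glued_UNIV_UNIV_eq by blast
    have "xx \<in> glued s_polys UNIV" "yy \<in> glued s_polys UNIV"
      using xx_glued yy_glued admissible_s_polys glued_mono[of "{0}" UNIV] by blast+
    then have "RR \<subseteq> ring_gen (glued s_polys UNIV \<union> {zz})"
      unfolding RR_def by (intro ring_gen_subset) (auto intro: ring_gen.gen)
    moreover have "eval_z a \<in> ring_gen (glued s_polys UNIV \<union> {zz})"
      by (rule eval_z_in_ring_gen) (auto intro: ring_gen.gen)
    moreover have "rho \<in> ring_gen (glued s_polys UNIV \<union> {zz})"
      using rho_glued_UNIV[OF admissible_s_polys] by (auto intro: ring_gen.gen)
    ultimately show "v \<in> ring_gen (glued s_polys UNIV \<union> {zz})"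
      unfolding r(2) using r(1) by (auto intro: ring_gen.add ring_gen.mult)
  qed
qed

lemma eval_z_mult_t_one_plus_t_rho:
  "eval_z b * (zz * (1 + zz) * rho) = eval_z ([:0, 1:] * (1 + [:0, 1:]) * b) * rho"
proof -
  have "eval_z ([:0, 1:] * (1 + [:0, 1:]) * b) = eval_z [:0, 1:] * (eval_z 1 + eval_z [:0, 1:]) * eval_z b"
    by (simp only: ring_hom_mult[OF is_ring_hom_eval_z] ring_hom_add[OF is_ring_hom_eval_z])
  then show ?thesis
    unfolding zz_eq_eval_z ring_hom_1[OF is_ring_hom_eval_z] by (simp add: ac_simps)
qed

lemma glued_UNIV_I01_eq:
  "glued UNIV I01 = {r + p * (zz * (1 + zz) * rho) | r p. r \<in> RR \<and> p \<in> range eval_z}"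
proof
  show "glued UNIV I01 \<subseteq> {r + p * (zz * (1 + zz) * rho) | r p. r \<in> RR \<and> p \<in> range eval_z}"
  proof
    fix v assume v: "v \<in> glued UNIV I01"
    then obtain r a where r: "r \<in> glued UNIV {0}" "v = r + eval_z a * rho"
      using glued_decompose[OF admissible_UNIV, of v] glued_mono[of I01 UNIV UNIV] by blast
    have r_RR: "r \<in> RR"
      using r RR_eq_glued by simp
    have "eval_z a * rho = v + r"
      using r(2) by (simp add: ac_simps T_add_self add.assoc[symmetric])
    also have "\<dots> \<in> glued UNIV I01"
      using glued_add[OF admissible_UNIV glue_ideal_I01 v] r_RR RR_subset_glued_I01 by blast
    finally obtain b where "a = [:0, 1:] * (1 + [:0, 1:]) * b"
      using eval_z_mult_rho_glued I01_dvd by blast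
    then have "v = r + eval_z b * (zz * (1 + zz) * rho)"
      using r(2) eval_z_mult_t_one_plus_t_rho by simp
    then show "v \<in> {r + p * (zz * (1 + zz) * rho) | r p. r \<in> RR \<and> p \<in> range eval_z}"
      using r_RR by blast
  qed
  show "{r + p * (zz * (1 + zz) * rho) | r p. r \<in> RR \<and> p \<in> range eval_z} \<subseteq> glued UNIV I01"
  proof
    fix x assume "x \<in> {r + p * (zz * (1 + zz) * rho) | r p. r \<in> RR \<and> p \<in> range eval_z}"
    then obtain r b where x: "x = r + eval_z b * (zz * (1 + zz) * rho)" and r: "r \<in> RR" by auto
    have "eval_z ([:0, 1:] * (1 + [:0, 1:]) * b) * rho \<in> glued UNIV I01"
      unfolding eval_z_mult_rho glued_mem using t_times_one_plus_t_in_I01[of b] by simp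
    then show "x \<in> glued UNIV I01"
      unfolding x eval_z_mult_t_one_plus_t_rho
      using glued_add[OF admissible_UNIV glue_ideal_I01] r RR_subset_glued_I01 by blast
  qed
qed

lemma t_times_one_plus_t_neq_0: "[:0, 1:] * (1 + [:0, 1:]) \<noteq> (0 :: bit poly)"
  by (simp add: one_pCons)

lemma AA_psubset_glued_s_polys_UNIV: "AA \<subset> glued s_polys UNIV"
  using AA_eq_glued glued_mono[of "{0}" UNIV] rho_glued_UNIV[OF admissible_s_polys]
    rho_notin_glued[of "{0}" s_polys] by auto

lemma RR_psubset_glued_I01: "RR \<subset> glued UNIV I01"
proof -
  have "eval_z ([:0, 1:] * (1 + [:0, 1:])) * rho \<in> glued UNIV I01"
    unfolding eval_z_mult_rho glued_mem using t_times_one_plus_t_in_I01[of 1] by simp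
  moreover have "eval_z ([:0, 1:] * (1 + [:0, 1:])) * rho \<notin> RR"
    unfolding RR_eq_glued eval_z_mult_rho glued_mem using t_times_one_plus_t_neq_0 by simp
  ultimately show ?thesis
    using RR_subset_glued_I01 by blast
qed

lemma glued_I01_psubset_glued_UNIV: "glued UNIV I01 \<subset> glued UNIV UNIV"
  using rho_notin_glued[of I01 UNIV] rho_glued_UNIV[OF admissible_UNIV] glued_mono[of I01 UNIV UNIV]
  by (auto simp: I01_def)


section \<open>The length of A*/A\<close>

lemma submod_between_AA_Astar:
  assumes sm: "submod AA L" and AL: "AA \<subseteq> L" and LS: "L \<subseteq> glued s_polys UNIV"
  shows "L = AA \<or> L = glued s_polys UNIV"
proof (cases "L = AA")
  case False
  then obtain x where x: "x \<in> L" "x \<notin> AA" using AL by blast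
  then obtain a b where xa: "x = a + kemb b * rho" "a \<in> AA"
    using LS glued_s_polys_UNIV_eq by (auto simp: kk_def)
  have "b \<noteq> 0"
  proof
    assume "b = 0"
    then show False using x xa by simp
  qed
  then have "x = a + rho" using xa by simp
  moreover have "- a \<in> L" using sm AL xa(2) by (auto simp: submod_def)
  ultimately have rho_L: "rho \<in> L"
    using sm x(1) unfolding submod_def by (metis add.commute add_diff_cancel_left' diff_conv_add_uminus)
  have "glued s_polys UNIV \<subseteq> L"
  proof
    fix y assume "y \<in> glued s_polys UNIV"
    then obtain a' b' where y: "y = a' + kemb b' * rho" "a' \<in> AA"
      using glued_s_polys_UNIV_eq by (auto simp: kk_def)
    have "kemb b' \<in> AA" unfolding AA_def by (rule kemb_in_ring_gen)
    then have "kemb b' * rho \<in> L" using sm rho_L by (auto simp: submod_def)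
    then show "y \<in> L" using sm y AL by (auto simp: submod_def)
  qed
  then show ?thesis using LS by blast
qed simp

lemma submod_AA_AA: "submod AA AA"
  unfolding submod_def AA_def by (auto intro: ring_gen.intros ring_gen_0)

lemma submod_AA_glued_s_polys_UNIV: "submod AA (glued s_polys UNIV)"
proof -
  have AA: "AA \<subseteq> glued s_polys UNIV"
    using AA_psubset_glued_s_polys_UNIV by blast
  have "a * u \<in> glued s_polys UNIV" if "a \<in> AA" "u \<in> glued s_polys UNIV" for a u
    using glued_closed[OF admissible_s_polys] that AA by blast
  moreover have "u + v \<in> glued s_polys UNIV" if "u \<in> glued s_polys UNIV" "v \<in> glued s_polys UNIV" for u v
    using glued_closed[OF admissible_s_polys] that by blast
  moreover have "0 \<in> glued s_polys UNIV"
    using AA AA_closed(3) by blast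
  ultimately show ?thesis
    unfolding submod_def using glued_uminus by blast
qed

lemma mod_length_AA_glued_s_polys_UNIV: "mod_length AA AA (glued s_polys UNIV) = 1"
proof -
  let ?S = "{n. \<exists>L. L 0 = AA \<and> L n = glued s_polys UNIV \<and> (\<forall>i<n. L i \<subset> L (Suc i))
    \<and> (\<forall>i\<le>n. submod AA (L i))}"
  have "1 \<in> ?S"
  proof -
    let ?L = "\<lambda>i::nat. if i = 0 then AA else glued s_polys UNIV"
    have "?L 0 = AA \<and> ?L 1 = glued s_polys UNIV \<and> (\<forall>i<1. ?L i \<subset> ?L (Suc i))
        \<and> (\<forall>i\<le>1. submod AA (?L i))"
      using AA_psubset_glued_s_polys_UNIV submod_AA_AA submod_AA_glued_s_polys_UNIV
      by (auto simp: le_Suc_eq)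
    then show ?thesis by (intro CollectI exI[of _ ?L])
  qed
  moreover have "n = 1" if "n \<in> ?S" for n
  proof -
    obtain L where L: "L 0 = AA" "L n = glued s_polys UNIV" "\<forall>i<n. L i \<subset> L (Suc i)"
        "\<forall>i\<le>n. submod AA (L i)"
      using \<open>n \<in> ?S\<close> by blast
    have "n \<noteq> 0" using L(1,2) AA_psubset_glued_s_polys_UNIV by auto
    moreover have "\<not> n \<ge> 2"
    proof
      assume n: "n \<ge> 2"
      have "L 0 \<subset> L 1" "L 1 \<subset> L 2" "submod AA (L 1)"
        using L(3,4) n by (simp_all add: numeral_2_eq_2)
      moreover have "L 2 \<subseteq> L n"
        using strict_chain_mono[OF L(3), of 2 n] n by simp
      ultimately have "L 1 \<noteq> AA" "L 1 \<noteq> glued s_polys UNIV" "AA \<subseteq> L 1" "L 1 \<subseteq> glued s_polys UNIV"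
        using L(1,2) by auto
      then show False
        using submod_between_AA_Astar \<open>submod AA (L 1)\<close> by blast
    qed
    ultimately show "n = 1" by simp
  qed
  ultimately have "?S = {1}"
    by (intro equalityI subsetI) auto
  then show ?thesis
    unfolding mod_length_def by (simp add: one_enat_def)
qed


section \<open>R as a quotient of k[X,Y,Z]\<close>

lemma is_ring_hom_eval3: "is_ring_hom eval3"
  unfolding eval3_def[abs_def] by (intro is_ring_hom_poly_map_poly is_ring_hom_kemb_T)

lemma eval3_gens: "eval3 polyX = xx" "eval3 polyY = yy" "eval3 [:0, 1:] = zz"
  by (simp_all add: eval3_def polyX_def polyY_def map_poly_pCons)

lemma range_eval3: "range eval3 = RR"
proof
  show "range eval3 \<subseteq> RR"
    unfolding eval3_def RR_def
    by (auto intro!: poly_map_poly_in_ring_gen simp: kemb_in_ring_gen intro: ring_gen.gen)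
  show "RR \<subseteq> range eval3"
    unfolding RR_def using eval3_gens by (intro ring_gen_subset_range[OF is_ring_hom_eval3]) (auto intro: sym)
qed

text \<open>Restricting f \<in> k[X,Y,Z] to the three lines, written as polynomials in s and t.\<close>

definition restrict_X0 :: "bit poly poly poly \<Rightarrow> st_poly" where
  "restrict_X0 f = map_poly (map_poly (\<lambda>h. coeff h 0)) f"
definition restrict_Y0 :: "bit poly poly poly \<Rightarrow> st_poly" where
  "restrict_Y0 f = map_poly (\<lambda>g. coeff g 0) f"
definition restrict_XY :: "bit poly poly poly \<Rightarrow> st_poly" where
  "restrict_XY f = map_poly (\<lambda>g. poly g [:0, 1:]) f"

lemma eval3_apply:
  "eval3 f i = poly (map_poly (\<lambda>g. poly (map_poly (\<lambda>h. poly (map_poly kemb h) (xx i)) g) (yy i)) f) (zz i)"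
  unfolding eval3_def by (simp add: poly_map_poly_apply kemb_apply)

lemma eval3_components:
  "eval3 f C1 = to_fract (restrict_X0 f)" "eval3 f C2 = to_fract (restrict_Y0 f)"
  "eval3 f C3 = to_fract (restrict_XY f)"
proof -
  have xyz: "xx C1 = 0" "yy C1 = var_s" "xx C2 = var_s" "yy C2 = 0" "xx C3 = var_s" "yy C3 = var_s"
      "zz i = var_t" for i
    by (simp_all add: xx_def yy_def zz_def K_uminus)
  show "eval3 f C1 = to_fract (restrict_X0 f)"
    unfolding eval3_apply restrict_X0_def to_fract_eq_eval xyz
    by (subst map_poly_map_poly) (simp_all add: o_def map_poly_map_poly poly_0_coeff_0 coeff_map_poly)
  show "eval3 f C2 = to_fract (restrict_Y0 f)"
    unfolding eval3_apply restrict_Y0_def to_fract_eq_eval xyz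
    by (subst map_poly_map_poly) (simp_all add: o_def poly_0_coeff_0 coeff_map_poly)
  have "poly (map_poly (\<lambda>h. poly (map_poly kemb h) var_s) g) var_s
      = poly (map_poly kemb (poly g [:0, 1:])) var_s" for g
    using ring_hom_poly[OF is_ring_hom_poly_map_poly[OF is_ring_hom_kemb_K], of g "[:0, 1:]" var_s]
    by (simp add: map_poly_pCons)
  then show "eval3 f C3 = to_fract (restrict_XY f)"
    unfolding eval3_apply restrict_XY_def to_fract_eq_eval xyz
    by (subst map_poly_map_poly) (simp_all add: o_def)
qed

lemma XY_X_plus_Y_dvd:
  fixes c :: "bit poly poly"
  assumes X0: "map_poly (\<lambda>h. coeff h 0) c = 0" and Y0: "coeff c 0 = 0" and XY: "poly c [:0, 1:] = 0"
  shows "[:[:0, 1:]:] * [:0, 1:] * ([:[:0, 1:]:] + [:0, 1:]) dvd c"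
proof -
  let ?X = "[:[:0, 1:]:] :: bit poly poly" and ?Y = "[:0, 1:] :: bit poly poly"
  have "poly c 0 = 0" using Y0 by (simp add: poly_0_coeff_0)
  then obtain c1 where c1: "c = ?Y * c1"
    by (metis dvdE minus_zero poly_eq_0_iff_dvd)
  have "poly c1 [:0, 1:] = 0" using XY c1 by simp
  then have "[:- [:0, 1:], 1:] dvd c1" by (simp only: poly_eq_0_iff_dvd)
  moreover have "[:- [:0, 1:], 1:] = ?X + ?Y" by (simp add: bit_poly_uminus)
  ultimately obtain c2 where c2: "c1 = (?X + ?Y) * c2" by (auto elim: dvdE)
  let ?m = "map_poly (\<lambda>h::bit poly. coeff h 0)"
  have "?m c = ?m ?Y * (?m ?X + ?m ?Y) * ?m c2"
    unfolding c1 c2 by (simp only: map_poly_mult_ring_hom[OF is_ring_hom_coeff_0] map_poly_add_ring_hom[OF is_ring_hom_coeff_0] mult.assoc)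
  then have "?m c2 = 0" using X0 by (simp add: map_poly_pCons)
  have "[:0, 1:] dvd coeff c2 n" for n
  proof -
    have "coeff (coeff c2 n) 0 = 0"
      using arg_cong[OF \<open>?m c2 = 0\<close>, of "\<lambda>p. coeff p n"] by (simp add: coeff_map_poly)
    then have "poly (coeff c2 n) 0 = 0"
      by (simp add: poly_0_coeff_0)
    then have "[:- 0, 1:] dvd coeff c2 n"
      by (simp only: poly_eq_0_iff_dvd)
    then show ?thesis by simp
  qed
  then have "?X dvd c2"
    unfolding const_poly_dvd_iff by blast
  then obtain c3 where "c2 = ?X * c3"
    by (rule dvdE)
  then have "c = (?X * ?Y * (?X + ?Y)) * c3"
    using c1 c2 by (simp add: ac_simps)
  then show ?thesis by (rule dvdI)
qed

lemma ker_eval3: "eval3 f = 0 \<longleftrightarrow> polyX * polyY * (polyX + polyY) dvd f"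
proof
  assume "eval3 f = 0"
  then have zero: "restrict_X0 f = 0" "restrict_Y0 f = 0" "restrict_XY f = 0"
    using eval3_components[of f] fun_cong[OF \<open>eval3 f = 0\<close>] by simp_all
  have "[:[:0, 1:]:] * [:0, 1:] * ([:[:0, 1:]:] + [:0, 1:]) dvd coeff f n" for n
    using zero[THEN arg_cong[where f = "\<lambda>p. coeff p n"]]
    by (intro XY_X_plus_Y_dvd) (simp_all add: restrict_X0_def restrict_Y0_def restrict_XY_def coeff_map_poly)
  moreover have "polyX * polyY * (polyX + polyY) = [:[:[:0, 1:]:] * [:0, 1:] * ([:[:0, 1:]:] + [:0, 1:]):]"
    by (simp add: polyX_def polyY_def)
  ultimately show "polyX * polyY * (polyX + polyY) dvd f"
    by (simp add: const_poly_dvd_iff)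
next
  assume "polyX * polyY * (polyX + polyY) dvd f"
  then obtain g where "f = polyX * polyY * (polyX + polyY) * g" by (auto elim: dvdE)
  then have "eval3 f = xx * yy * (xx + yy) * eval3 g"
    using eval3_gens ring_hom_mult[OF is_ring_hom_eval3] ring_hom_add[OF is_ring_hom_eval3] by simp
  moreover have "xx * yy * (xx + yy) = 0"
    by (rule ext) (case_tac x; simp add: xx_def yy_def K_add_self)
  ultimately show "eval3 f = 0" by simp
qed


lemma int_closure_RR: "int_closure RR = triples UNIV"
  using int_closure_glued[OF admissible_UNIV glue_ideal_0] by (simp add: RR_eq_glued)

lemma int_closure_AA: "int_closure AA = triples s_polys"
  using int_closure_glued[OF admissible_s_polys glue_ideal_0] by (simp add: AA_eq_glued)

lemma strict_closure_RR: "strict_closure RR (int_closure RR) = glued UNIV UNIV"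
  unfolding int_closure_RR unfolding RR_eq_glued by (rule strict_closure_glued[OF admissible_UNIV])

lemma strict_closure_AA: "strict_closure AA (int_closure AA) = glued s_polys UNIV"
  unfolding int_closure_AA unfolding AA_eq_glued by (rule strict_closure_glued[OF admissible_s_polys])

lemma int_closure_RR_components: "int_closure RR = {v. \<forall>i. \<exists>r\<in>RR. v i = r i}"
  unfolding int_closure_RR unfolding RR_eq_glued by (rule triples_eq_components[OF admissible_UNIV])

lemma int_closure_AA_components: "int_closure AA = {v. \<forall>i. \<exists>a\<in>AA. v i = a i}"
  unfolding int_closure_AA unfolding AA_eq_glued by (rule triples_eq_components[OF admissible_s_polys])

lemma RR_vanishing_components:
  "{r \<in> RR. r C1 = 0} = {xx * r | r. r \<in> RR}" "{r \<in> RR. r C2 = 0} = {yy * r | r. r \<in> RR}"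
  "{r \<in> RR. r C3 = 0} = {(xx + yy) * r | r. r \<in> RR}"
  using vanishing_component_eq[OF admissible_UNIV, of C1] vanishing_component_eq[OF admissible_UNIV, of C2]
    vanishing_component_eq[OF admissible_UNIV, of C3]
  by (simp_all add: RR_eq_glued line_form_eqs)

lemma AA_vanishing_components:
  "{a \<in> AA. a C1 = 0} = {xx * a | a. a \<in> AA}" "{a \<in> AA. a C2 = 0} = {yy * a | a. a \<in> AA}"
  "{a \<in> AA. a C3 = 0} = {(xx + yy) * a | a. a \<in> AA}"
  using vanishing_component_eq[OF admissible_s_polys, of C1] vanishing_component_eq[OF admissible_s_polys, of C2]
    vanishing_component_eq[OF admissible_s_polys, of C3]
  by (simp_all add: AA_eq_glued line_form_eqs)

lemma rho_in_int_closure_AA: "rho \<in> int_closure AA"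
  unfolding int_closure_AA using rho_glued_UNIV[OF admissible_s_polys] glued_subset_triples by blast

lemma strict_closure_AA_eq_max_ideal:
  "strict_closure AA (int_closure AA)
    = {a + u | a u. a \<in> AA \<and> u \<in> ext_ideal {a * xx + b * yy | a b. a \<in> AA \<and> b \<in> AA} (int_closure AA)}"
  unfolding strict_closure_AA unfolding int_closure_AA ext_ideal_max_ideal_eq
  by (rule glued_s_polys_UNIV_eq_max_ideal)

lemma strict_closure_AA_eq_rho: "strict_closure AA (int_closure AA) = {a + c * rho | a c. a \<in> AA \<and> c \<in> kk}"
  unfolding strict_closure_AA by (rule glued_s_polys_UNIV_eq)

lemma mod_length_strict_closure_AA: "mod_length AA AA (strict_closure AA (int_closure AA)) = 1"
  unfolding strict_closure_AA by (rule mod_length_AA_glued_s_polys_UNIV)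

lemma AA_psubset_strict_closure_AA: "AA \<subset> strict_closure AA (int_closure AA)"
  unfolding strict_closure_AA by (rule AA_psubset_glued_s_polys_UNIV)

lemma strict_closure_RR_eq_ring_gen:
  "strict_closure RR (int_closure RR) = ring_gen (strict_closure AA (int_closure AA) \<union> {zz})"
  unfolding strict_closure_RR strict_closure_AA by (rule glued_UNIV_UNIV_eq_ring_gen)

lemma strict_closure_RR_eq_rho:
  "strict_closure RR (int_closure RR) = {r + p * rho | r p. r \<in> RR \<and> p \<in> ring_gen (kk \<union> {zz})}"
  unfolding strict_closure_RR ring_gen_eq_range_eval_z by (rule glued_UNIV_UNIV_eq)

lemma wa_closure_RR_eq_rho:
  "wa_closure RR = {r + p * (zz * (1 + zz) * rho) | r p. r \<in> RR \<and> p \<in> ring_gen (kk \<union> {zz})}"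
  unfolding wa_closure_RR ring_gen_eq_range_eval_z by (rule glued_UNIV_I01_eq)

lemma RR_psubset_wa_closure_RR: "RR \<subset> wa_closure RR"
  unfolding wa_closure_RR by (rule RR_psubset_glued_I01)

lemma wa_closure_RR_psubset_strict_closure_RR: "wa_closure RR \<subset> strict_closure RR (int_closure RR)"
  unfolding wa_closure_RR strict_closure_RR by (rule glued_I01_psubset_glued_UNIV)

theorem theorem4p4:
  defines "Rbar \<equiv> int_closure RR"
      and "Abar \<equiv> int_closure AA"
      and "Rstar \<equiv> strict_closure RR (int_closure RR)"
      and "Astar \<equiv> strict_closure AA (int_closure AA)"
      and "mm \<equiv> {a * xx + b * yy | a b. a \<in> AA \<and> b \<in> AA}"
      and "kz \<equiv> ring_gen (kk \<union> {zz})"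
  shows
    \<comment> \<open>(0) the model: R = k[x,y,z] is the image of U, and the kernel is (XY(X+Y))\<close>
    "range eval3 = RR \<and>
     (\<forall>f. eval3 f = 0 \<longleftrightarrow> polyX * polyY * (polyX + polyY) dvd f)
     \<comment> \<open>(1)\<close>
   \<and> Rbar = {v. \<forall>i. \<exists>r\<in>RR. v i = r i}
   \<and> {r \<in> RR. r C1 = 0} = {xx * r | r. r \<in> RR}
   \<and> {r \<in> RR. r C2 = 0} = {yy * r | r. r \<in> RR}
   \<and> {r \<in> RR. r C3 = 0} = {(xx + yy) * r | r. r \<in> RR}
   \<and> Abar = {v. \<forall>i. \<exists>a\<in>AA. v i = a i}
   \<and> {a \<in> AA. a C1 = 0} = {xx * a | a. a \<in> AA}
   \<and> {a \<in> AA. a C2 = 0} = {yy * a | a. a \<in> AA}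
   \<and> {a \<in> AA. a C3 = 0} = {(xx + yy) * a | a. a \<in> AA}
     \<comment> \<open>(2)\<close>
   \<and> rho \<in> Abar
   \<and> Astar = {a + u | a u. a \<in> AA \<and> u \<in> ext_ideal mm Abar}
   \<and> Astar = {a + c * rho | a c. a \<in> AA \<and> c \<in> kk}
   \<and> mod_length AA AA Astar = 1
     \<comment> \<open>(3)\<close>
   \<and> wa_closure AA = AA \<and> AA \<subset> Astar
     \<comment> \<open>(4)\<close>
   \<and> Rstar = ring_gen (Astar \<union> {zz})
   \<and> Rstar = {r + p * rho | r p. r \<in> RR \<and> p \<in> kz}
   \<and> wa_closure RR = {r + p * (zz * (1 + zz) * rho) | r p. r \<in> RR \<and> p \<in> kz}
   \<and> RR \<subset> wa_closure RR \<and> wa_closure RR \<subset> Rstar"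
  unfolding assms
  by (intro conjI allI range_eval3 ker_eval3 int_closure_RR_components int_closure_AA_components
      RR_vanishing_components AA_vanishing_components rho_in_int_closure_AA
      strict_closure_AA_eq_max_ideal strict_closure_AA_eq_rho mod_length_strict_closure_AA
      wa_closure_AA AA_psubset_strict_closure_AA strict_closure_RR_eq_ring_gen strict_closure_RR_eq_rho
      wa_closure_RR_eq_rho RR_psubset_wa_closure_RR wa_closure_RR_psubset_strict_closure_RR)

end
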